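(* Let $A$ be a Riesz-spectral operator on a Hilbert space $X$ with simple eigenvalues $(\lambda_n)_{n\in\mathbb N}$, only finitely many of which lie in $\mathbb C_0=\{\mathrm{Re}\,\lambda>0\}$. Let $B\in\mathcal L(\mathbb C,X)$ and $F\in\mathcal L(X,\mathbb C)$ be such that $A+BF$ generates a uniformly bounded $C_0$-semigroup on $X$. If $\tau>0$ satisfies (i) $\tau(\lambda_n-\lambda_m)\ne2\ell\pi i$ for all $\ell\in\mathbb Z\setminus\{0\}$ and all $n,m$ with $\lambda_n,\lambda_m\in\mathbb C_0$, and (ii) $FR(z,T(\tau))S(\tau)\ne1$ for all $z\in\rho(T(\tau))$ with $|z|>1$, then $\{z:|z|>1\}\subset\rho(\Delta(\tau))$.
   Context: A Riesz-spectral operator: closed operator with simple distinct eigenvalues (finitely many accumulation points) whose eigenvectors form a Riesz basis; it generates the $C_0$-semigroup $(T(t))$. $S(\tau)u=\int_0^\tau T(s)Bu\,ds$, $\Delta(\tau)=T(\tau)+S(\tau)F$. *)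

theory Defs
  imports "HOL-Analysis.Analysis"
begin

text \<open>HOL-Analysis has no complex vector spaces / complex inner products, so we
introduce them as type classes (complex scalar multiplication compatible with
the real one, and a sesquilinear inner product inducing the norm).\<close>

class cvec = real_vector +
  fixes scaleC :: "complex \<Rightarrow> 'a \<Rightarrow> 'a"
  assumes scaleC_add_right: "scaleC a (x + y) = scaleC a x + scaleC a y"
    and scaleC_add_left: "scaleC (a + b) x = scaleC a x + scaleC b x"
    and scaleC_scaleC: "scaleC a (scaleC b x) = scaleC (a * b) x"
    and scaleC_one: "scaleC 1 x = x"
    and scaleR_scaleC: "scaleR r x = scaleC (complex_of_real r) x"

class chilbert = cvec + banach +
  fixes cinner :: "'a \<Rightarrow> 'a \<Rightarrow> complex"
  assumes cinner_commute: "cinner x y = cnj (cinner y x)"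
    and cinner_add_left: "cinner (x + y) z = cinner x z + cinner y z"
    and cinner_scaleC_left: "cinner (scaleC c x) y = cnj c * cinner x y"
    and cinner_norm: "norm x = sqrt (Re (cinner x x))"

instantiation complex :: chilbert
begin
definition scaleC_complex :: "complex \<Rightarrow> complex \<Rightarrow> complex" where
  "scaleC_complex a x = a * x"
definition cinner_complex :: "complex \<Rightarrow> complex \<Rightarrow> complex" where
  "cinner_complex x y = cnj x * y"
instance
proof
  fix a b x y z :: complex and r :: real and c :: complex
  show "scaleC a (x + y) = scaleC a x + scaleC a y"
    by (simp add: scaleC_complex_def algebra_simps)
  show "scaleC (a + b) x = scaleC a x + scaleC b x"
    by (simp add: scaleC_complex_def algebra_simps)
  show "scaleC a (scaleC b x) = scaleC (a * b) x"
    by (simp add: scaleC_complex_def)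
  show "scaleC 1 x = x" by (simp add: scaleC_complex_def)
  show "scaleR r x = scaleC (complex_of_real r) x"
    by (simp add: scaleC_complex_def scaleR_conv_of_real)
  show "cinner x y = cnj (cinner y x)" by (simp add: cinner_complex_def mult.commute)
  show "cinner (x + y) z = cinner x z + cinner y z"
    by (simp add: cinner_complex_def algebra_simps)
  show "cinner (scaleC c x) y = cnj c * cinner x y"
    by (simp add: cinner_complex_def scaleC_complex_def)
  show "norm x = sqrt (Re (cinner x x))"
    by (simp add: cinner_complex_def complex_mult_cnj cmod_def power2_eq_square)
qed
end

definition clin :: "('a::cvec \<Rightarrow> 'b::cvec) \<Rightarrow> bool" where
  "clin f \<longleftrightarrow> (\<forall>x y. f (x + y) = f x + f y) \<and> (\<forall>c x. f (scaleC c x) = scaleC c (f x))"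

text \<open>Bounded complex-linear operators, i.e. elements of L(X,Y).\<close>
definition bounded_clin :: "('a::{cvec,real_normed_vector} \<Rightarrow> 'b::{cvec,real_normed_vector}) \<Rightarrow> bool" where
  "bounded_clin f \<longleftrightarrow> clin f \<and> (\<exists>K. \<forall>x. norm (f x) \<le> K * norm x)"

definition csubspace :: "'a::cvec set \<Rightarrow> bool" where
  "csubspace D \<longleftrightarrow> 0 \<in> D \<and> (\<forall>x\<in>D. \<forall>y\<in>D. x + y \<in> D) \<and> (\<forall>c. \<forall>x\<in>D. scaleC c x \<in> D)"

definition closed_operator :: "('a::chilbert \<Rightarrow> 'a) \<Rightarrow> 'a set \<Rightarrow> bool" where
  "closed_operator A D \<longleftrightarrow> csubspace D
     \<and> (\<forall>x\<in>D. \<forall>y\<in>D. A (x + y) = A x + A y)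
     \<and> (\<forall>c. \<forall>x\<in>D. A (scaleC c x) = scaleC c (A x))
     \<and> closed {(x, A x) | x. x \<in> D}"

definition riesz_basis :: "(nat \<Rightarrow> 'a::chilbert) \<Rightarrow> bool" where
  "riesz_basis phi \<longleftrightarrow>
     closure {(\<Sum>n<N. scaleC (\<alpha> n) (phi n)) | \<alpha> N. True} = UNIV
   \<and> (\<exists>m M. 0 < m \<and> 0 < M \<and>
        (\<forall>\<alpha> N. m * (\<Sum>n<N. (cmod (\<alpha> n))\<^sup>2) \<le> (norm (\<Sum>n<N. scaleC (\<alpha> n) (phi n)))\<^sup>2
              \<and> (norm (\<Sum>n<N. scaleC (\<alpha> n) (phi n)))\<^sup>2 \<le> M * (\<Sum>n<N. (cmod (\<alpha> n))\<^sup>2)))"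

definition riesz_spectral :: "('a::chilbert \<Rightarrow> 'a) \<Rightarrow> 'a set \<Rightarrow> (nat \<Rightarrow> complex) \<Rightarrow> (nat \<Rightarrow> 'a) \<Rightarrow> bool" where
  "riesz_spectral A D lam phi \<longleftrightarrow> closed_operator A D
     \<and> inj lam
     \<and> (\<forall>n. phi n \<in> D \<and> phi n \<noteq> 0 \<and> A (phi n) = scaleC (lam n) (phi n))
     \<and> (\<forall>z x. x \<in> D \<and> x \<noteq> 0 \<and> A x = scaleC z x \<longrightarrow> (\<exists>n c. z = lam n \<and> x = scaleC c (phi n)))
     \<and> riesz_basis phi
     \<and> finite {z. z islimpt range lam}"

definition c0_semigroup :: "(real \<Rightarrow> 'a::chilbert \<Rightarrow> 'a) \<Rightarrow> bool" where
  "c0_semigroup T \<longleftrightarrow> (\<forall>t\<ge>0. bounded_clin (T t))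
     \<and> T 0 = id
     \<and> (\<forall>s\<ge>0. \<forall>t\<ge>0. T (s + t) = T s \<circ> T t)
     \<and> (\<forall>x. ((\<lambda>t. T t x) \<longlongrightarrow> x) (at_right 0))"

definition generates :: "('a::chilbert \<Rightarrow> 'a) \<Rightarrow> 'a set \<Rightarrow> (real \<Rightarrow> 'a \<Rightarrow> 'a) \<Rightarrow> bool" where
  "generates A D T \<longleftrightarrow> c0_semigroup T
     \<and> D = {x. \<exists>y. ((\<lambda>h. scaleR (1 / h) (T h x - x)) \<longlongrightarrow> y) (at_right 0)}
     \<and> (\<forall>x\<in>D. ((\<lambda>h. scaleR (1 / h) (T h x - x)) \<longlongrightarrow> A x) (at_right 0))"

definition resolvent_set :: "('a::chilbert \<Rightarrow> 'a) \<Rightarrow> complex set" where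
  "resolvent_set L = {z. bij (\<lambda>x. scaleC z x - L x) \<and> bounded_clin (inv (\<lambda>x. scaleC z x - L x))}"

definition resolvent :: "complex \<Rightarrow> ('a::chilbert \<Rightarrow> 'a) \<Rightarrow> 'a \<Rightarrow> 'a" where
  "resolvent z L = inv (\<lambda>x. scaleC z x - L x)"

definition Sop :: "(real \<Rightarrow> 'a::chilbert \<Rightarrow> 'a) \<Rightarrow> (complex \<Rightarrow> 'a) \<Rightarrow> real \<Rightarrow> complex \<Rightarrow> 'a" where
  "Sop T B \<tau> u = integral {0..\<tau>} (\<lambda>s. T s (B u))"

definition Delta :: "(real \<Rightarrow> 'a::chilbert \<Rightarrow> 'a) \<Rightarrow> (complex \<Rightarrow> 'a) \<Rightarrow> ('a \<Rightarrow> complex) \<Rightarrow> real \<Rightarrow> 'a \<Rightarrow> 'a" where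
  "Delta T B F \<tau> x = T \<tau> x + Sop T B \<tau> (F x)"

end

theory Submission
  imports Defs
begin

text \<open>
  For \<open>|z| > 1\<close> everything is diagonal in the Riesz basis \<open>phi\<close>: \<open>T \<tau> (phi j) = \<mu> j \<cdot> phi j\<close>
  with \<open>\<mu> j = exp (\<tau> \<lambda>\<^sub>j)\<close>, and only the finitely many unstable \<open>\<mu> j\<close> satisfy \<open>|\<mu> j| > 1\<close>, so the
  multipliers \<open>1 / (z - \<mu> j)\<close> off the eigenvalue \<open>z\<close> are bounded and define a (reduced) resolvent
  of \<open>T \<tau>\<close>. Since \<open>S(\<tau>) u = u \<cdot> s\<close> for a fixed vector \<open>s\<close>, \<open>\<Delta>(\<tau>) = T \<tau> + s F\<close> is a
  rank-one perturbation of \<open>T \<tau>\<close>.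
  If \<open>z\<close> is not an eigenvalue of \<open>T \<tau>\<close>, the Sherman--Morrison formula inverts \<open>z - \<Delta>(\<tau>)\<close>
  because \<open>F R(z, T \<tau>) s \<noteq> 1\<close> by (ii).
  If \<open>z = \<mu> n\<close>, then \<open>\<lambda>\<^sub>n\<close> is unstable and, by (i), \<open>z\<close> is a simple eigenvalue of \<open>T \<tau>\<close>.
  Boundedness of the closed-loop semigroup forces \<open>F phi\<^sub>n \<noteq> 0\<close> and \<open>\<psi>\<^sub>n s \<noteq> 0\<close>
  (\<open>\<psi>\<^sub>n\<close> the \<open>n\<close>-th coefficient functional), and for such a controllable and observable mode
  the rank-one perturbation removes the eigenvalue: the inverse of \<open>z - \<Delta>(\<tau>)\<close> is written down
  explicitly from the reduced resolvent.
\<close>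

lemma scaleC_zero_left [simp]: "scaleC 0 (x::'a::cvec) = 0"
  using scaleC_add_left[of 0 0 x] by simp

lemma scaleC_zero_right [simp]: "scaleC c (0::'a::cvec) = 0"
  using scaleC_add_right[of c 0 0] by simp

lemma scaleC_minus_left: "scaleC (- c) (x::'a::cvec) = - scaleC c x"
  using scaleC_add_left[of c "-c" x] by (simp add: eq_neg_iff_add_eq_0 add.commute)

lemma scaleC_minus_right: "scaleC c (- (x::'a::cvec)) = - scaleC c x"
  using scaleC_add_right[of c x "-x"] by (simp add: eq_neg_iff_add_eq_0 add.commute)

lemma scaleC_diff_left: "scaleC (c - d) (x::'a::cvec) = scaleC c x - scaleC d x"
  by (simp only: diff_conv_add_uminus scaleC_add_left scaleC_minus_left)

lemma scaleC_diff_right: "scaleC c ((x::'a::cvec) - y) = scaleC c x - scaleC c y"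
  by (simp only: diff_conv_add_uminus scaleC_add_right scaleC_minus_right)

lemma scaleC_sum_right: "scaleC c (sum f A) = (\<Sum>i\<in>A. scaleC c (f i :: 'a::cvec))"
  by (induction A rule: infinite_finite_induct) (simp_all add: scaleC_add_right)

lemma scaleR_scaleC_commute: "scaleR r (scaleC c (x::'a::cvec)) = scaleC c (scaleR r x)"
  by (simp add: scaleR_scaleC scaleC_scaleC mult.commute)

lemma scaleC_complex [simp]: "scaleC a (x::complex) = a * x"
  by (simp add: scaleC_complex_def)

lemma cinner_scaleC_right: "cinner x (scaleC c y) = c * cinner x (y::'a::chilbert)"
  by (metis cinner_commute cinner_scaleC_left complex_cnj_cnj complex_cnj_mult)

lemma norm_scaleC [simp]: "norm (scaleC c (x::'a::chilbert)) = cmod c * norm x"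
proof -
  have "Re (cinner (scaleC c x) (scaleC c x)) = (cmod c)\<^sup>2 * Re (cinner x x)"
    by (simp add: cinner_scaleC_left cinner_scaleC_right cmod_power2 algebra_simps)
      (simp add: power2_eq_square algebra_simps)
  then show ?thesis
    by (simp add: cinner_norm[of "scaleC c x"] cinner_norm[of x] real_sqrt_mult)
qed

lemma bounded_bilinear_scaleC: "bounded_bilinear (\<lambda>c (x::'a::chilbert). scaleC c x)"
proof (rule bounded_bilinear.intro)
  show "\<exists>K. \<forall>a b. norm (scaleC a (b::'a)) \<le> norm a * norm b * K"
    by (rule exI[of _ 1]) simp
qed (auto simp: scaleC_add_right scaleC_add_left scaleR_scaleC_commute scaleR_scaleC scaleC_scaleC mult.commute)

lemmas bounded_linear_scaleC_right = bounded_bilinear.bounded_linear_right[OF bounded_bilinear_scaleC]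
lemmas bounded_linear_scaleC_left = bounded_bilinear.bounded_linear_left[OF bounded_bilinear_scaleC]

lemma bounded_clin_iff:
  "bounded_clin f \<longleftrightarrow> bounded_linear f \<and> (\<forall>c x. f (scaleC c x) = scaleC c (f x))"
proof
  assume f: "bounded_clin f"
  then obtain K where K: "\<And>x. norm (f x) \<le> K * norm x" and "clin f"
    unfolding bounded_clin_def by blast
  then have "linear f" "\<forall>c x. f (scaleC c x) = scaleC c (f x)"
    unfolding clin_def by (auto intro!: linearI simp: scaleR_scaleC)
  with K show "bounded_linear f \<and> (\<forall>c x. f (scaleC c x) = scaleC c (f x))"
    by (auto intro!: bounded_linear_intro[where K=K] simp: linear_add linear_scale mult.commute)
next
  assume "bounded_linear f \<and> (\<forall>c x. f (scaleC c x) = scaleC c (f x))"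
  then show "bounded_clin f"
    unfolding bounded_clin_def clin_def
    by (metis bounded_linear.bounded bounded_linear.linear linear_add mult.commute)
qed

lemma bounded_clin_imp_bounded_linear: "bounded_clin f \<Longrightarrow> bounded_linear f"
  by (simp add: bounded_clin_iff)

lemma bounded_clin_scaleC: "bounded_clin f \<Longrightarrow> f (scaleC c x) = scaleC c (f x)"
  by (simp add: bounded_clin_iff)

lemma bounded_clin_add: "bounded_clin f \<Longrightarrow> f (x + y) = f x + f y"
  by (simp add: bounded_clin_iff linear_add bounded_linear.linear)

lemma bounded_clin_diff: "bounded_clin f \<Longrightarrow> f (x - y) = f x - f y"
  by (simp add: bounded_clin_iff linear_diff bounded_linear.linear)

lemma bounded_clin_zero: "bounded_clin f \<Longrightarrow> f 0 = 0"
  by (simp add: bounded_clin_iff linear_0 bounded_linear.linear)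

lemma bounded_clin_sum: "bounded_clin f \<Longrightarrow> f (sum g A) = (\<Sum>i\<in>A. f (g i))"
  by (simp add: bounded_clin_iff linear_sum bounded_linear.linear)

lemma bounded_clin_pos_bound: "bounded_clin f \<Longrightarrow> \<exists>K>0. \<forall>x. norm (f x) \<le> K * norm x"
  using bounded_linear.pos_bounded[OF bounded_clin_imp_bounded_linear] by (metis mult.commute)

lemma bounded_clin_tendsto: "bounded_clin f \<Longrightarrow> (g \<longlongrightarrow> l) F \<Longrightarrow> ((\<lambda>x. f (g x)) \<longlongrightarrow> f l) F"
  by (rule bounded_linear.tendsto[OF bounded_clin_imp_bounded_linear])

lemma bounded_clin_ident: "bounded_clin (\<lambda>x::'a::chilbert. x)"
  by (simp add: bounded_clin_iff bounded_linear_ident)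

lemma bounded_clin_compose: "bounded_clin f \<Longrightarrow> bounded_clin g \<Longrightarrow> bounded_clin (\<lambda>x. f (g x))"
  by (simp add: bounded_clin_iff bounded_linear_compose)

lemma bounded_clin_add_fun: "bounded_clin f \<Longrightarrow> bounded_clin g \<Longrightarrow> bounded_clin (\<lambda>x. f x + g x)"
  by (simp add: bounded_clin_iff bounded_linear_add scaleC_add_right)

lemma bounded_clin_diff_fun: "bounded_clin f \<Longrightarrow> bounded_clin g \<Longrightarrow> bounded_clin (\<lambda>x. f x - g x)"
  by (simp add: bounded_clin_iff bounded_linear_sub scaleC_diff_right)

lemma bounded_clin_scaleC_fun:
  "bounded_clin (f::'a::chilbert \<Rightarrow> 'b::chilbert) \<Longrightarrow> bounded_clin (\<lambda>x. scaleC c (f x))"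
  by (simp add: bounded_clin_iff bounded_linear_compose[OF bounded_linear_scaleC_right]
      scaleC_scaleC mult.commute)

lemma bounded_clin_rank_one:
  "bounded_clin (f::'a::chilbert \<Rightarrow> complex) \<Longrightarrow> bounded_clin (\<lambda>x. scaleC (f x) (v::'b::chilbert))"
  by (simp add: bounded_clin_iff bounded_linear_compose[OF bounded_linear_scaleC_left] scaleC_scaleC)

section \<open>Dense subspaces and uniform boundedness\<close>

lemma csubspace_diff: "csubspace V \<Longrightarrow> x \<in> V \<Longrightarrow> y \<in> V \<Longrightarrow> x - (y::'a::cvec) \<in> V"
  unfolding csubspace_def using scaleC_minus_left[of 1 y] by (metis diff_conv_add_uminus scaleC_one)

lemma bounded_clin_eq_on_dense:
  assumes dense: "closure V = UNIV" and "bounded_clin f" "bounded_clin g" and eq: "\<And>x. x \<in> V \<Longrightarrow> f x = g x"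
  shows "f = g"
proof
  fix x
  obtain xs where xs: "\<And>n. xs n \<in> V" "xs \<longlonglongrightarrow> x"
    using closure_sequential[of x V] dense by auto
  have "(\<lambda>n. f (xs n)) \<longlonglongrightarrow> f x" "(\<lambda>n. f (xs n)) \<longlonglongrightarrow> g x"
    using bounded_clin_tendsto[OF assms(2) xs(2)] bounded_clin_tendsto[OF assms(3) xs(2)] xs(1) eq
    by simp_all
  then show "f x = g x" by (rule LIMSEQ_unique)
qed

lemma bounded_clin_extension:
  fixes f :: "'a::chilbert \<Rightarrow> 'b::chilbert"
  assumes dense: "closure V = UNIV" and sub: "csubspace V"
    and add: "\<And>x y. x \<in> V \<Longrightarrow> y \<in> V \<Longrightarrow> f (x + y) = f x + f y"
    and scale: "\<And>c x. x \<in> V \<Longrightarrow> f (scaleC c x) = scaleC c (f x)"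
    and bound: "\<And>x. x \<in> V \<Longrightarrow> norm (f x) \<le> K * norm x" and K: "0 \<le> K"
  shows "\<exists>g. bounded_clin g \<and> (\<forall>x\<in>V. g x = f x) \<and> (\<forall>x. norm (g x) \<le> K * norm x)"
proof -
  have f_diff: "f (x - y) = f x - f y" if "x \<in> V" "y \<in> V" for x y
    using add[of "x - y" y] csubspace_diff[OF sub that] that by (simp add: eq_diff_eq)
  have "K-lipschitz_on V f"
  proof (rule lipschitz_onI)
    fix x y assume "x \<in> V" "y \<in> V"
    then show "dist (f x) (f y) \<le> K * dist x y"
      using bound[of "x - y"] f_diff csubspace_diff[OF sub] by (simp add: dist_norm)
  qed (rule K)
  then obtain g where "uniformly_continuous_on (closure V) g" and g_f: "\<And>x. x \<in> V \<Longrightarrow> f x = g x"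
    using uniformly_continuous_on_extension_on_closure lipschitz_on_uniformly_continuous by metis
  then have cont: "continuous_on UNIV g"
    using uniformly_continuous_imp_continuous dense by metis
  have lim: "(\<lambda>n. g (xs n)) \<longlonglongrightarrow> g x" if "xs \<longlonglongrightarrow> x" for xs x
    using cont that by (simp add: continuous_on_eq_continuous_at isCont_tendsto_compose)
  have approx: "\<exists>xs. (\<forall>n. xs n \<in> V) \<and> xs \<longlonglongrightarrow> x" for x
    using closure_sequential[of x V] dense by auto
  have g_add: "g (x + y) = g x + g y" for x y
  proof -
    obtain xs ys where xs: "\<forall>n. xs n \<in> V" "xs \<longlonglongrightarrow> x" and ys: "\<forall>n. ys n \<in> V" "ys \<longlonglongrightarrow> y"
      using approx by metis
    have "g (xs n + ys n) = g (xs n) + g (ys n)" for n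
      using sub xs(1) ys(1) add g_f unfolding csubspace_def by metis
    then have "(\<lambda>n. g (xs n + ys n)) \<longlonglongrightarrow> g x + g y"
      using tendsto_add[OF lim[OF xs(2)] lim[OF ys(2)]] by simp
    then show ?thesis using lim[OF tendsto_add[OF xs(2) ys(2)]] LIMSEQ_unique by blast
  qed
  have g_scale: "g (scaleC c x) = scaleC c (g x)" for c x
  proof -
    obtain xs where xs: "\<forall>n. xs n \<in> V" "xs \<longlonglongrightarrow> x" using approx by metis
    have "g (scaleC c (xs n)) = scaleC c (g (xs n))" for n
      using sub xs(1) scale g_f unfolding csubspace_def by metis
    then have "(\<lambda>n. g (scaleC c (xs n))) \<longlonglongrightarrow> scaleC c (g x)"
      using bounded_linear.tendsto[OF bounded_linear_scaleC_right lim[OF xs(2)]] by simp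
    then show ?thesis
      using lim[OF bounded_linear.tendsto[OF bounded_linear_scaleC_right xs(2)]] LIMSEQ_unique by blast
  qed
  have "continuous_on UNIV (\<lambda>x. norm (g x) - K * norm x)"
    using cont by (intro continuous_intros)
  then have g_bound: "norm (g x) \<le> K * norm x" for x
    using continuous_le_on_closure[of V "\<lambda>x. norm (g x) - K * norm x" x 0] dense bound g_f
    by simp
  have "bounded_clin g"
    unfolding bounded_clin_def clin_def using g_add g_scale g_bound by blast
  then show ?thesis using g_f g_bound by auto
qed

lemma linear_bound_of_ball_bound:
  fixes L :: "'a::real_normed_vector \<Rightarrow> 'b::real_normed_vector"
  assumes lin: "linear L" and r: "0 < r" and ball: "\<And>x. x \<in> ball x0 r \<Longrightarrow> norm (L x) \<le> k"
  shows "norm (L y) \<le> (4 * k / r) * norm y"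
proof (cases "y = 0")
  case True
  then show ?thesis using linear_0[OF lin] by simp
next
  case False
  define a where "a = r / (2 * norm y)"
  have a: "a > 0" using False r by (simp add: a_def)
  have "norm (a *\<^sub>R y) = r / 2" using False r by (simp add: a_def)
  then have "norm (L (x0 + a *\<^sub>R y)) \<le> k" using r ball by (simp add: dist_norm)
  moreover have "norm (L x0) \<le> k" using ball r by simp
  moreover have "a *\<^sub>R L y = L (x0 + a *\<^sub>R y) - L x0"
    using lin by (simp add: linear_add linear_scale)
  ultimately have "a * norm (L y) \<le> 2 * k" using a
    by (metis norm_scaleR abs_of_pos norm_triangle_ineq4 order_trans add_mono mult_2)
  then have "norm (L y) \<le> 2 * k / a" using a by (simp add: field_simps)
  also have "\<dots> = (4 * k / r) * norm y" using False r by (simp add: a_def field_simps)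
  finally show ?thesis .
qed

lemma uniform_boundedness:
  fixes L :: "nat \<Rightarrow> 'a::banach \<Rightarrow> 'b::real_normed_vector"
  assumes lin: "\<And>n. bounded_linear (L n)" and pointwise: "\<And>x. \<exists>C. \<forall>n. norm (L n x) \<le> C"
  shows "\<exists>K. \<forall>n x. norm (L n x) \<le> K * norm x"
proof -
  define C where "C k = {x. \<forall>n. norm (L n x) \<le> real k}" for k :: nat
  have closed: "closed (C k)" for k
  proof -
    have "C k = (\<Inter>n. {x. norm (L n x) \<le> real k})" by (auto simp: C_def)
    moreover have "closed {x. norm (L n x) \<le> real k}" for n
      by (intro closed_Collect_le continuous_intros linear_continuous_on[OF lin])
    ultimately show ?thesis by auto
  qed
  have "\<Union>(range C) = UNIV"
  proof -
    have "x \<in> \<Union>(range C)" for x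
    proof -
      obtain c where "\<forall>n. norm (L n x) \<le> c" using pointwise by blast
      moreover obtain k :: nat where "c \<le> real k" using real_arch_simple by blast
      ultimately have "x \<in> C k" by (auto simp: C_def intro: order_trans)
      then show ?thesis by blast
    qed
    then show ?thesis by blast
  qed
  then have "\<exists>k. interior (C k) \<noteq> {}"
    using Baire_category_alt[of euclidean "range C"] completely_metrizable_space_euclidean closed
    by (fastforce simp: closed_closedin[symmetric])
  then obtain k r x0 where r: "r > 0" "ball x0 r \<subseteq> C k"
    by (metis all_not_in_conv open_contains_ball open_interior interior_subset subset_trans)
  then have "norm (L n y) \<le> (4 * real k / r) * norm y" for n y
    by (intro linear_bound_of_ball_bound[OF bounded_linear.linear[OF lin] r(1), of x0])
      (use r(2) in \<open>auto simp: C_def\<close>)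
  then show ?thesis by blast
qed

section \<open>\<open>C\<^sub>0\<close>-semigroups and their generators\<close>

lemma c0_semigroup_bounded_clin: "c0_semigroup E \<Longrightarrow> 0 \<le> t \<Longrightarrow> bounded_clin (E t)"
  unfolding c0_semigroup_def by blast

lemma c0_semigroup_zero: "c0_semigroup E \<Longrightarrow> E 0 x = x"
  unfolding c0_semigroup_def by simp

lemma c0_semigroup_add: "c0_semigroup E \<Longrightarrow> 0 \<le> s \<Longrightarrow> 0 \<le> t \<Longrightarrow> E (s + t) x = E s (E t x)"
  unfolding c0_semigroup_def by (metis comp_apply)

lemma c0_semigroup_continuous_at_0: "c0_semigroup E \<Longrightarrow> continuous (at 0 within {0..}) (\<lambda>t. E t x)"
  unfolding c0_semigroup_def continuous_within at_within_Ici_at_right by simp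

lemma c0_semigroup_small_time:
  assumes "c0_semigroup E" "0 < e"
  shows "\<exists>d>0. \<forall>h. 0 \<le> h \<and> h < d \<longrightarrow> norm (E h x - x) < e"
proof -
  have "\<forall>\<^sub>F h in at 0 within {0..}. dist (E h x) x < e"
    using c0_semigroup_continuous_at_0[OF assms(1), of x] assms
    by (auto simp: continuous_within c0_semigroup_zero dest: tendstoD)
  then obtain d where d: "d > 0" "\<forall>h\<in>{0..}. h \<noteq> 0 \<and> h < d \<longrightarrow> norm (E h x - x) < e"
    by (auto simp: eventually_at dist_norm)
  have "norm (E h x - x) < e" if "0 \<le> h" "h < d" for h
    using d that assms(2) by (cases "h = 0") (auto simp: c0_semigroup_zero[OF assms(1)])
  with d(1) show ?thesis by blast
qed

lemma c0_semigroup_locally_bounded: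
  assumes sg: "c0_semigroup E"
  shows "\<exists>\<delta>>0. \<exists>M. \<forall>t. 0 \<le> t \<and> t \<le> \<delta> \<longrightarrow> (\<forall>x. norm (E t x) \<le> M * norm x)"
proof (rule ccontr)
  assume unbounded: "\<not> ?thesis"
  have "\<exists>t x. 0 \<le> t \<and> t \<le> inverse (real (Suc n)) \<and> real n * norm x < norm (E t x)" for n
  proof -
    have "inverse (real (Suc n)) > 0" by simp
    then show ?thesis using unbounded by (auto simp: not_le)
  qed
  then obtain tt xs where tt: "\<And>n. 0 \<le> tt n" "\<And>n. tt n \<le> inverse (real (Suc n))"
    and xs: "\<And>n. real n * norm (xs n) < norm (E (tt n) (xs n))"
    by metis
  have "tt \<longlonglongrightarrow> 0"
    by (rule tendsto_sandwich[OF _ _ tendsto_const LIMSEQ_inverse_real_of_nat]) (use tt in auto)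
  then have "(\<lambda>n. E (tt n) y) \<longlonglongrightarrow> y" for y
    using continuous_within_tendsto_compose'[OF c0_semigroup_continuous_at_0[OF sg]] tt(1)
    by (simp add: c0_semigroup_zero[OF sg]) blast
  then have "\<exists>C. \<forall>n. norm (E (tt n) y) \<le> C" for y
    by (meson BseqE convergent_imp_Bseq convergentI)
  moreover have "bounded_linear (E (tt n))" for n
    using tt(1) c0_semigroup_bounded_clin[OF sg] bounded_clin_imp_bounded_linear by blast
  ultimately obtain K where K: "\<And>n x. norm (E (tt n) x) \<le> K * norm x"
    using uniform_boundedness[of "\<lambda>n. E (tt n)"] by blast
  obtain n :: nat where "K < real n" using reals_Archimedean2 by blast
  then have "K * norm (xs n) \<le> real n * norm (xs n)" by (simp add: mult_right_mono)
  then show False using xs[of n] K[of n "xs n"] by linarith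
qed

lemma c0_semigroup_bounded_on_interval:
  assumes sg: "c0_semigroup E"
  shows "\<exists>M>0. \<forall>t. 0 \<le> t \<and> t \<le> L \<longrightarrow> (\<forall>x. norm (E t x) \<le> M * norm x)"
proof -
  obtain \<delta> M0 where \<delta>: "\<delta> > 0" and M0: "\<And>t x. 0 \<le> t \<Longrightarrow> t \<le> \<delta> \<Longrightarrow> norm (E t x) \<le> M0 * norm x"
    using c0_semigroup_locally_bounded[OF sg] by blast
  define M where "M = max M0 1"
  have M: "M \<ge> 1" and M_bound: "\<And>t x. 0 \<le> t \<Longrightarrow> t \<le> \<delta> \<Longrightarrow> norm (E t x) \<le> M * norm x"
    unfolding M_def by (auto intro: order_trans[OF M0 mult_right_mono])
  have bound: "norm (E t x) \<le> M ^ Suc n * norm x" if "0 \<le> t" "t \<le> real n * \<delta>" for n t x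
    using that
  proof (induction n arbitrary: t)
    case 0
    then show ?case using M mult_right_mono[of 1 M "norm x"] by (simp add: c0_semigroup_zero[OF sg])
  next
    case (Suc n)
    show ?case
    proof (cases "t \<le> \<delta>")
      case True
      then have "norm (E t x) \<le> M * norm x" using M_bound Suc.prems by blast
      also have "\<dots> \<le> M ^ Suc (Suc n) * norm x"
        using M power_increasing[of 1 "Suc (Suc n)" M] by (intro mult_right_mono) auto
      finally show ?thesis .
    next
      case False
      then have "E t x = E \<delta> (E (t - \<delta>) x)"
        using c0_semigroup_add[OF sg, of \<delta> "t - \<delta>" x] \<delta> by simp
      then have "norm (E t x) \<le> M * norm (E (t - \<delta>) x)" using M_bound \<delta> by auto
      also have "\<dots> \<le> M * (M ^ Suc n * norm x)"
        using Suc.IH[of "t - \<delta>"] Suc.prems False M by (simp add: algebra_simps)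
      finally show ?thesis by (simp add: mult.assoc)
    qed
  qed
  obtain n :: nat where "L / \<delta> \<le> real n" using real_arch_simple by blast
  then have "L \<le> real n * \<delta>" using \<delta> by (simp add: field_simps)
  then have "\<forall>t. 0 \<le> t \<and> t \<le> L \<longrightarrow> (\<forall>x. norm (E t x) \<le> M ^ Suc n * norm x)"
    using bound by (meson order_trans)
  moreover have "M ^ Suc n > 0" using M by simp
  ultimately show ?thesis by blast
qed

lemma c0_semigroup_continuous_on:
  assumes sg: "c0_semigroup E"
  shows "continuous_on {0..} (\<lambda>t. E t x)"
  unfolding continuous_on_iff
proof (intro ballI allI impI)
  fix t0 :: real and e :: real assume t0: "t0 \<in> {0..}" and e: "0 < e"
  obtain M where M: "M > 0" "\<And>t x. 0 \<le> t \<Longrightarrow> t \<le> t0 \<Longrightarrow> norm (E t x) \<le> M * norm x"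
    using c0_semigroup_bounded_on_interval[OF sg, of t0] by blast
  obtain d where d: "d > 0" "\<And>h. 0 \<le> h \<Longrightarrow> h < d \<Longrightarrow> norm (E h x - x) < e / M"
    using c0_semigroup_small_time[OF sg, of "e / M" x] e M by auto
  have close: "norm (E t' x - E t x) < e" if "0 \<le> t" "t \<le> t'" "t \<le> t0" "t' - t < d" for t t'
  proof -
    have "E t' x - E t x = E t (E (t' - t) x - x)"
      using c0_semigroup_add[OF sg, of t "t' - t" x] that
      by (simp add: bounded_clin_diff[OF c0_semigroup_bounded_clin[OF sg]])
    then have "norm (E t' x - E t x) \<le> M * norm (E (t' - t) x - x)"
      using M(2) that by simp
    also have "\<dots> < M * (e / M)" using d that M by (intro mult_strict_left_mono) auto
    finally show ?thesis using M by simp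
  qed
  have "dist (E t x) (E t0 x) < e" if t: "t \<in> {0..}" "dist t t0 < d" for t
  proof (cases "t0 \<le> t")
    case True
    then have "t - t0 < d" using t(2) by (simp add: dist_real_def)
    then show ?thesis using close[of t0 t] t0 True by (simp add: dist_norm)
  next
    case False
    then have "t0 - t < d" using t(2) by (simp add: dist_real_def)
    then have "norm (E t0 x - E t x) < e" using close[of t t0] t False by simp
    then show ?thesis by (simp add: dist_norm norm_minus_commute)
  qed
  then show "\<exists>d>0. \<forall>t\<in>{0..}. dist t t0 < d \<longrightarrow> dist (E t x) (E t0 x) < e"
    using d(1) by blast
qed

lemma generates_c0_semigroup: "generates G D E \<Longrightarrow> c0_semigroup E"
  unfolding generates_def by blast

lemma generates_tendsto:
  "generates G D E \<Longrightarrow> x \<in> D \<Longrightarrow> ((\<lambda>h. scaleR (1 / h) (E h x - x)) \<longlongrightarrow> G x) (at_right 0)"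
  unfolding generates_def by blast

lemma generates_domainI:
  "generates G D E \<Longrightarrow> ((\<lambda>h. scaleR (1 / h) (E h x - x)) \<longlongrightarrow> y) (at_right 0) \<Longrightarrow> x \<in> D"
  unfolding generates_def by blast

lemma generates_commute:
  assumes g: "generates G D E" and x: "x \<in> D" and t: "0 \<le> t"
  shows "E t x \<in> D \<and> G (E t x) = E t (G x)"
proof -
  have sg: "c0_semigroup E" using generates_c0_semigroup[OF g] .
  have Et: "bounded_clin (E t)" using c0_semigroup_bounded_clin[OF sg t] .
  then have "linear (E t)" using bounded_clin_imp_bounded_linear bounded_linear.linear by blast
  then have "E t (scaleR (1 / h) (E h x - x)) = scaleR (1 / h) (E h (E t x) - E t x)" if "h > 0" for h
    using c0_semigroup_add[OF sg, of h t x] c0_semigroup_add[OF sg, of t h x] that t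
    by (simp add: add.commute linear_diff linear_scale)
  then have "\<forall>\<^sub>F h in at_right 0. E t (scaleR (1 / h) (E h x - x)) = scaleR (1 / h) (E h (E t x) - E t x)"
    by (auto simp: eventually_at_right_field intro: exI[of _ 1])
  with bounded_clin_tendsto[OF Et generates_tendsto[OF g x]]
  have lim: "((\<lambda>h. scaleR (1 / h) (E h (E t x) - E t x)) \<longlongrightarrow> E t (G x)) (at_right 0)"
    by (rule Lim_transform_eventually)
  then have "E t x \<in> D" by (rule generates_domainI[OF g])
  with lim show ?thesis using tendsto_unique[OF _ generates_tendsto[OF g] lim] by simp
qed

lemma tendsto_apply_uniformly_bounded:
  fixes L :: "'i \<Rightarrow> 'a::real_normed_vector \<Rightarrow> 'b::real_normed_vector"
  assumes bounded: "\<forall>\<^sub>F k in F. linear (L k) \<and> (\<forall>y. norm (L k y) \<le> M * norm y)"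
    and lim: "((\<lambda>k. L k y) \<longlongrightarrow> l) F" and ys: "(ys \<longlongrightarrow> y) F"
  shows "((\<lambda>k. L k (ys k)) \<longlongrightarrow> l) F"
proof -
  have "((\<lambda>k. M * norm (ys k - y)) \<longlongrightarrow> M * 0) F"
    using ys by (intro tendsto_mult_left) (simp add: tendsto_norm_zero_iff LIM_zero)
  moreover have "\<forall>\<^sub>F k in F. norm (L k (ys k - y)) \<le> M * norm (ys k - y)"
    using bounded by eventually_elim simp
  ultimately have "((\<lambda>k. L k (ys k - y)) \<longlongrightarrow> 0) F"
    by (auto intro: Lim_null_comparison)
  from tendsto_add[OF lim this] have "((\<lambda>k. L k y + L k (ys k - y)) \<longlongrightarrow> l) F" by simp
  moreover have "\<forall>\<^sub>F k in F. L k y + L k (ys k - y) = L k (ys k)"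
    using bounded by eventually_elim (simp add: linear_diff)
  ultimately show ?thesis by (rule Lim_transform_eventually)
qed

lemma has_vector_derivative_at_quotientI:
  fixes f :: "real \<Rightarrow> 'a::real_normed_vector"
  assumes "((\<lambda>h. (1 / h) *\<^sub>R (f (t + h) - f t)) \<longlongrightarrow> v) (at 0)"
  shows "(f has_vector_derivative v) (at t)"
proof -
  have lim: "((\<lambda>h. norm ((1 / h) *\<^sub>R (f (t + h) - f t) - v)) \<longlongrightarrow> 0) (at 0)"
    using assms by (simp add: tendsto_norm_zero_iff LIM_zero)
  have quotient: "norm ((1 / h) *\<^sub>R (f (t + h) - f t) - v) = norm (f (t + h) - f t - h *\<^sub>R v) / norm h"
    if "h \<noteq> 0" for h
  proof -
    have "(1 / h) *\<^sub>R (f (t + h) - f t) - v = (1 / h) *\<^sub>R (f (t + h) - f t - h *\<^sub>R v)"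
      using that by (simp add: scaleR_diff_right)
    then show ?thesis by (simp add: divide_inverse_commute)
  qed
  have "\<forall>\<^sub>F h in at 0. norm ((1 / h) *\<^sub>R (f (t + h) - f t) - v) = norm (f (t + h) - f t - h *\<^sub>R v) / norm h"
    using eventually_neq_at_within[of 0 0 UNIV] by eventually_elim (rule quotient)
  with lim have "((\<lambda>h. norm (f (t + h) - f t - h *\<^sub>R v) / norm h) \<longlongrightarrow> 0) (at 0)"
    by (rule Lim_transform_eventually)
  then show ?thesis
    unfolding has_vector_derivative_def has_derivative_at by (simp add: bounded_linear_scaleR_left)
qed

lemma generates_right_quotient:
  assumes g: "generates G D E" and x: "x \<in> D" and t: "0 \<le> t"
  shows "((\<lambda>h. (1 / h) *\<^sub>R (E (t + h) x - E t x)) \<longlongrightarrow> E t (G x)) (at_right 0)"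
proof -
  have sg: "c0_semigroup E" using generates_c0_semigroup[OF g] .
  have "linear (E t)"
    using c0_semigroup_bounded_clin[OF sg t] bounded_clin_imp_bounded_linear bounded_linear.linear by blast
  then have "E t ((1 / h) *\<^sub>R (E h x - x)) = (1 / h) *\<^sub>R (E (t + h) x - E t x)" if "h > 0" for h
    using c0_semigroup_add[OF sg, of t h x] that t by (simp add: linear_diff linear_scale)
  then have "\<forall>\<^sub>F h in at_right 0. E t ((1 / h) *\<^sub>R (E h x - x)) = (1 / h) *\<^sub>R (E (t + h) x - E t x)"
    by (auto simp: eventually_at_right_field intro: exI[of _ 1])
  with bounded_clin_tendsto[OF c0_semigroup_bounded_clin[OF sg t] generates_tendsto[OF g x]]
  show ?thesis by (rule Lim_transform_eventually)
qed

lemma generates_left_quotient: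
  assumes g: "generates G D E" and x: "x \<in> D" and t: "0 < t"
  shows "((\<lambda>h. (1 / h) *\<^sub>R (E (t + h) x - E t x)) \<longlongrightarrow> E t (G x)) (at_left 0)"
proof -
  have sg: "c0_semigroup E" using generates_c0_semigroup[OF g] .
  have lin: "linear (E s)" if "0 \<le> s" for s
    using c0_semigroup_bounded_clin[OF sg that] bounded_clin_imp_bounded_linear bounded_linear.linear by blast
  obtain M where M: "\<And>s y. 0 \<le> s \<Longrightarrow> s \<le> t \<Longrightarrow> norm (E s y) \<le> M * norm y"
    using c0_semigroup_bounded_on_interval[OF sg, of t] by blast
  have near: "\<forall>\<^sub>F k in at_right 0. 0 < k \<and> k < t"
    using t by (auto simp: eventually_at_right_field intro: exI[of _ t])
  have "((\<lambda>k. t - k) \<longlongrightarrow> t) (at_right 0)"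
    by (auto intro!: tendsto_eq_intros)
  then have "((\<lambda>k. E (t - k) (G x)) \<longlongrightarrow> E t (G x)) (at_right 0)"
    using t near by (intro continuous_on_tendsto_compose[OF c0_semigroup_continuous_on[OF sg]])
      (auto elim: eventually_mono)
  moreover have "\<forall>\<^sub>F k in at_right 0. linear (E (t - k)) \<and> (\<forall>y. norm (E (t - k) y) \<le> M * norm y)"
    using near M lin by (auto elim: eventually_mono)
  ultimately have "((\<lambda>k. E (t - k) ((1 / k) *\<^sub>R (E k x - x))) \<longlongrightarrow> E t (G x)) (at_right 0)"
    using tendsto_apply_uniformly_bounded[where L="\<lambda>k. E (t - k)", OF _ _ generates_tendsto[OF g x]]
    by blast
  moreover have "\<forall>\<^sub>F k in at_right 0.
      E (t - k) ((1 / k) *\<^sub>R (E k x - x)) = (1 / - k) *\<^sub>R (E (t + - k) x - E t x)"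
    using near
  proof eventually_elim
    case (elim k)
    then show ?case
      using c0_semigroup_add[OF sg, of "t - k" k x] lin[of "t - k"] by (simp add: linear_diff linear_scale)
  qed
  ultimately show ?thesis
    unfolding filterlim_at_left_to_right by (auto intro: Lim_transform_eventually)
qed

lemma generates_has_vector_derivative:
  assumes g: "generates G D E" and x: "x \<in> D" and t: "0 < t"
  shows "((\<lambda>s. E s x) has_vector_derivative E t (G x)) (at t)"
  using filterlim_split_at[OF generates_left_quotient[OF assms] generates_right_quotient[OF g x]] t
  by (intro has_vector_derivative_at_quotientI) simp

lemma has_vector_derivative_scaleC_eq_exp:
  fixes f :: "real \<Rightarrow> 'a::chilbert"
  assumes L: "0 < L" and cont: "continuous_on {0..L} f"
    and der: "\<And>s. s \<in> {0<..<L} \<Longrightarrow> (f has_vector_derivative scaleC c (f s)) (at s)"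
    and t: "t \<in> {0..L}"
  shows "f t = scaleC (exp (c * of_real t)) (f 0)"
proof -
  define u where "u s = scaleC (exp (- c * of_real s)) (f s)" for s
  have exp_der: "((\<lambda>s. exp (- c * of_real s)) has_vector_derivative (- c * exp (- c * of_real s))) (at s)" for s
    by (rule has_vector_derivative_real_field) (auto intro!: derivative_eq_intros)
  have "(u has_vector_derivative 0) (at s)" if s: "s \<in> {0<..<L}" for s
    unfolding u_def
    using bounded_bilinear.has_vector_derivative[OF bounded_bilinear_scaleC exp_der der[OF s]]
    by (simp add: scaleC_scaleC scaleC_minus_left mult.commute)
  moreover have "continuous_on {0..L} u"
    unfolding u_def
    by (rule bounded_bilinear.continuous_on[OF bounded_bilinear_scaleC _ cont]) (intro continuous_intros)
  ultimately have "u t = u 0"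
    using t has_derivative_zero_unique_strong_interval[of "{0, L}" 0 L u "u 0" t]
    by (force simp: has_vector_derivative_def intro: has_derivative_at_withinI)
  then have "scaleC (exp (c * of_real t)) (u t) = scaleC (exp (c * of_real t)) (f 0)"
    by (simp add: u_def scaleC_one)
  then show ?thesis
    by (simp add: u_def scaleC_scaleC scaleC_one flip: exp_add)
qed

lemma generates_eigenvector:
  assumes g: "generates G D E" and x: "x \<in> D" and Gx: "G x = scaleC c x" and t: "0 \<le> t"
  shows "E t x = scaleC (exp (c * of_real t)) x"
proof (cases "t = 0")
  case True
  then show ?thesis using c0_semigroup_zero[OF generates_c0_semigroup[OF g]] by (simp add: scaleC_one)
next
  case False
  have sg: "c0_semigroup E" using generates_c0_semigroup[OF g] .
  have "E t x = scaleC (exp (c * of_real t)) (E 0 x)"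
  proof (rule has_vector_derivative_scaleC_eq_exp)
    show "continuous_on {0..t} (\<lambda>s. E s x)"
      by (rule continuous_on_subset[OF c0_semigroup_continuous_on[OF sg]]) auto
    fix s assume s: "s \<in> {0<..<t}"
    then show "((\<lambda>s. E s x) has_vector_derivative scaleC c (E s x)) (at s)"
      using generates_has_vector_derivative[OF g x, of s] Gx
      by (simp add: bounded_clin_scaleC[OF c0_semigroup_bounded_clin[OF sg]])
  qed (use t False in auto)
  then show ?thesis using c0_semigroup_zero[OF sg] by simp
qed

lemma generates_left_eigenvector:
  assumes g: "generates G D E" and \<psi>: "bounded_clin (\<psi> :: 'a::chilbert \<Rightarrow> complex)"
    and eig: "\<And>y. y \<in> D \<Longrightarrow> \<psi> (G y) = c * \<psi> y" and y: "y \<in> D" and t: "0 \<le> t"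
  shows "\<psi> (E t y) = exp (c * of_real t) * \<psi> y"
proof (cases "t = 0")
  case True
  then show ?thesis using c0_semigroup_zero[OF generates_c0_semigroup[OF g]] by simp
next
  case False
  have sg: "c0_semigroup E" using generates_c0_semigroup[OF g] .
  have "\<psi> (E t y) = scaleC (exp (c * of_real t)) (\<psi> (E 0 y))"
  proof (rule has_vector_derivative_scaleC_eq_exp[where f="\<lambda>s. \<psi> (E s y)"])
    show "continuous_on {0..t} (\<lambda>s. \<psi> (E s y))"
      using linear_continuous_on[OF bounded_clin_imp_bounded_linear[OF \<psi>]]
      by (rule continuous_on_compose2[OF _ continuous_on_subset[OF c0_semigroup_continuous_on[OF sg]]]) auto
    fix s assume s: "s \<in> {0<..<t}"
    have "((\<lambda>s. \<psi> (E s y)) has_vector_derivative \<psi> (E s (G y))) (at s)"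
      using generates_has_vector_derivative[OF g y, of s] s
      by (intro bounded_linear.has_vector_derivative[OF bounded_clin_imp_bounded_linear[OF \<psi>]]) auto
    moreover have "\<psi> (E s (G y)) = c * \<psi> (E s y)"
      using generates_commute[OF g y, of s] eig s by (metis greaterThanLessThan_iff less_eq_real_def)
    ultimately show "((\<lambda>s. \<psi> (E s y)) has_vector_derivative scaleC c (\<psi> (E s y))) (at s)" by simp
  qed (use t False in auto)
  then show ?thesis using c0_semigroup_zero[OF sg] by simp
qed

lemma tendsto_exp_diff_quotient:
  "((\<lambda>h::real. (1 / h) *\<^sub>R (exp (c * of_real h) - 1)) \<longlongrightarrow> (c::complex)) (at_right 0)"
proof (cases "c = 0")
  case False
  have "filterlim (\<lambda>h::real. c * of_real h) (at 0) (at_right 0)"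
  proof (rule filterlim_atI)
    show "((\<lambda>h::real. c * of_real h) \<longlongrightarrow> 0) (at_right 0)"
      by (intro tendsto_eq_intros) (auto intro: tendsto_ident_at)
    show "\<forall>\<^sub>F h in at_right 0. c * complex_of_real h \<noteq> 0"
      using False unfolding eventually_at_right_field by (intro exI[of _ 1]) auto
  qed
  from filterlim_compose[OF lim_exp_minus_1 this]
  have "((\<lambda>h::real. c * ((exp (c * of_real h) - 1) / (c * of_real h))) \<longlongrightarrow> c * 1) (at_right 0)"
    by (intro tendsto_mult_left) (simp add: o_def)
  moreover have "\<forall>\<^sub>F h in at_right 0.
      c * ((exp (c * of_real h) - 1) / (c * of_real h)) = (1 / h) *\<^sub>R (exp (c * of_real h) - 1)"
    unfolding eventually_at_right_field using False
    by (intro exI[of _ 1]) (auto simp: scaleR_conv_of_real field_simps)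
  ultimately show ?thesis by (simp add: Lim_transform_eventually)
qed simp

lemma integral_exp_complex:
  fixes c :: complex
  assumes c: "c \<noteq> 0" and t: "0 \<le> t"
  shows "integral {0..t} (\<lambda>r. exp (c * of_real r)) = (exp (c * of_real t) - 1) / c"
proof -
  have "((\<lambda>r. exp (c * of_real r)) has_integral (exp (c * of_real t) / c - exp (c * of_real 0) / c)) {0..t}"
  proof (rule fundamental_theorem_of_calculus[OF t])
    fix x assume "x \<in> {0..t}"
    have "((\<lambda>z. exp (c * z) / c) has_field_derivative exp (c * of_real x)) (at (of_real x))"
      using c by (auto intro!: derivative_eq_intros)
    then show "((\<lambda>r. exp (c * of_real r) / c) has_vector_derivative exp (c * of_real x)) (at x within {0..t})"
      by (rule has_vector_derivative_real_field)
  qed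
  then show ?thesis by (simp add: integral_unique diff_divide_distrib)
qed

lemma generates_left_eigenvector_generator:
  assumes g: "generates G D E" and \<psi>: "bounded_clin (\<psi> :: 'a::chilbert \<Rightarrow> complex)"
    and \<psi>E: "\<And>t x. 0 \<le> t \<Longrightarrow> \<psi> (E t x) = exp (c * of_real t) * \<psi> x" and y: "y \<in> D"
  shows "\<psi> (G y) = c * \<psi> y"
proof -
  have "\<psi> ((1 / h) *\<^sub>R (E h y - y)) = ((1 / h) *\<^sub>R (exp (c * of_real h) - 1)) * \<psi> y" if "h > 0" for h
    using \<psi>E[of h y] that bounded_clin_imp_bounded_linear[OF \<psi>]
    by (simp add: linear_diff linear_scale bounded_linear.linear scaleR_conv_of_real algebra_simps)
  then have "\<forall>\<^sub>F h in at_right 0. ((1 / h) *\<^sub>R (exp (c * of_real h) - 1)) * \<psi> y = \<psi> ((1 / h) *\<^sub>R (E h y - y))"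
    by (auto simp: eventually_at_right_field intro: exI[of _ 1])
  with tendsto_mult_right[OF tendsto_exp_diff_quotient]
  have "((\<lambda>h. \<psi> ((1 / h) *\<^sub>R (E h y - y))) \<longlongrightarrow> c * \<psi> y) (at_right 0)"
    by (rule Lim_transform_eventually)
  with bounded_clin_tendsto[OF \<psi> generates_tendsto[OF g y]] show ?thesis
    by (rule tendsto_unique[OF trivial_limit_at_right_real])
qed

lemma exp_growth_bounded_imp_nonpos:
  fixes a :: real
  assumes p: "0 < p" and bounded: "\<And>t. 0 \<le> t \<Longrightarrow> exp (a * t) * p \<le> K"
  shows "a \<le> 0"
proof (rule ccontr)
  assume "\<not> a \<le> 0"
  define t where "t = (\<bar>K\<bar> / p + 1) / a"
  have "0 \<le> t" "a * t = \<bar>K\<bar> / p + 1" using \<open>\<not> a \<le> 0\<close> p by (auto simp: t_def)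
  then have "\<bar>K\<bar> / p + 2 \<le> exp (a * t)" using exp_ge_add_one_self[of "a * t"] by simp
  then have "(\<bar>K\<bar> / p + 2) * p \<le> exp (a * t) * p" using p by (intro mult_right_mono) auto
  then have "\<bar>K\<bar> + 2 * p \<le> K" using bounded[OF \<open>0 \<le> t\<close>] p by (simp add: algebra_simps)
  then show False using p by linarith
qed

lemma bounded_semigroup_eigenvalue:
  assumes g: "generates G D E" and bounded: "\<And>t x. 0 \<le> t \<Longrightarrow> norm (E t x) \<le> M * norm x"
    and x: "x \<in> D" "x \<noteq> 0" and Gx: "G x = scaleC c x"
  shows "Re c \<le> 0"
proof (rule exp_growth_bounded_imp_nonpos)
  fix t :: real assume "0 \<le> t"
  then show "exp (Re c * t) * norm x \<le> M * norm x"
    using bounded[of t x] generates_eigenvector[OF g x(1) Gx] by simp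
qed (use x in simp)

lemma bounded_semigroup_left_eigenvalue:
  assumes g: "generates G D E" and bounded: "\<And>t x. 0 \<le> t \<Longrightarrow> norm (E t x) \<le> M * norm x"
    and \<psi>: "bounded_clin (\<psi> :: 'a::chilbert \<Rightarrow> complex)" and eig: "\<And>y. y \<in> D \<Longrightarrow> \<psi> (G y) = c * \<psi> y"
    and y: "y \<in> D" "\<psi> y \<noteq> 0"
  shows "Re c \<le> 0"
proof -
  obtain K where K: "\<And>x. norm (\<psi> x) \<le> K * norm x" "0 < K" using bounded_clin_pos_bound[OF \<psi>] by blast
  show ?thesis
  proof (rule exp_growth_bounded_imp_nonpos)
    fix t :: real assume t: "0 \<le> t"
    have "exp (Re c * t) * cmod (\<psi> y) = cmod (\<psi> (E t y))"
      using generates_left_eigenvector[OF g \<psi> eig y(1) t] by (simp add: norm_mult)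
    also have "\<dots> \<le> K * norm (E t y)" by (rule K(1))
    also have "\<dots> \<le> K * (M * norm y)" using bounded[OF t] K(2) by (simp add: mult_left_mono)
    finally show "exp (Re c * t) * cmod (\<psi> y) \<le> K * (M * norm y)" .
  qed (use y in simp)
qed

section \<open>Riesz bases\<close>

definition lincomb :: "(nat \<Rightarrow> 'a::cvec) \<Rightarrow> (nat \<Rightarrow> complex) \<Rightarrow> nat \<Rightarrow> 'a" where
  "lincomb phi \<alpha> N = (\<Sum>n<N. scaleC (\<alpha> n) (phi n))"

definition finite_span :: "(nat \<Rightarrow> 'a::cvec) \<Rightarrow> 'a set" where
  "finite_span phi = {lincomb phi \<alpha> N | \<alpha> N. True}"

text \<open>A finitely supported coefficient sequence of \<open>x\<close> and a bound of its support, chosen by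
  \<open>SOME\<close>; it is meaningful only on \<open>finite_span phi\<close>, where for a Riesz basis the sequence is
  unique.\<close>

definition span_coeffs :: "(nat \<Rightarrow> 'a::cvec) \<Rightarrow> 'a \<Rightarrow> (nat \<Rightarrow> complex) \<times> nat" where
  "span_coeffs phi x = (SOME p. (\<forall>n\<ge>snd p. fst p n = 0) \<and> x = lincomb phi (fst p) (snd p))"

lemma lincomb_add: "lincomb phi (\<lambda>n. \<alpha> n + \<beta> n) N = lincomb phi \<alpha> N + lincomb phi \<beta> N"
  by (simp add: lincomb_def scaleC_add_left sum.distrib)

lemma lincomb_scale: "lincomb phi (\<lambda>n. c * \<alpha> n) N = scaleC c (lincomb phi \<alpha> N)"
  by (simp add: lincomb_def scaleC_sum_right scaleC_scaleC)

lemma lincomb_diff: "lincomb phi (\<lambda>n. \<alpha> n - \<beta> n) N = lincomb phi \<alpha> N - lincomb phi \<beta> N"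
  by (simp add: lincomb_def scaleC_diff_left sum_subtractf)

lemma lincomb_extend: "\<forall>n\<ge>N. \<alpha> n = 0 \<Longrightarrow> N \<le> N' \<Longrightarrow> lincomb phi \<alpha> N' = lincomb phi \<alpha> N"
  unfolding lincomb_def by (rule sum.mono_neutral_right) auto

lemma lincomb_truncate: "lincomb phi \<alpha> N = lincomb phi (\<lambda>n. if n < N then \<alpha> n else 0) N"
  unfolding lincomb_def by (rule sum.cong) auto

lemma lincomb_delta: "lincomb phi (\<lambda>n. if n = j then c else 0) (Suc j) = scaleC c (phi j)"
proof -
  have "lincomb phi (\<lambda>n. if n = j then c else 0) (Suc j) = (\<Sum>n<Suc j. if n = j then scaleC c (phi j) else 0)"
    unfolding lincomb_def by (rule sum.cong) auto
  then show ?thesis by (simp add: sum.delta')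
qed

lemma bounded_clin_lincomb:
  "bounded_clin g \<Longrightarrow> g (lincomb phi \<alpha> N) = (\<Sum>n<N. scaleC (\<alpha> n) (g (phi n)))"
  by (simp add: lincomb_def bounded_clin_sum bounded_clin_scaleC)

lemma riesz_basis_dense: "riesz_basis phi \<Longrightarrow> closure (finite_span phi) = UNIV"
  unfolding riesz_basis_def finite_span_def lincomb_def by blast

lemma riesz_basis_bounds:
  "riesz_basis phi \<Longrightarrow> \<exists>m M. 0 < m \<and> 0 < M \<and>
     (\<forall>\<alpha> N. m * (\<Sum>n<N. (cmod (\<alpha> n))\<^sup>2) \<le> (norm (lincomb phi \<alpha> N))\<^sup>2
            \<and> (norm (lincomb phi \<alpha> N))\<^sup>2 \<le> M * (\<Sum>n<N. (cmod (\<alpha> n))\<^sup>2))"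
  unfolding riesz_basis_def lincomb_def by blast

lemma finite_span_supported:
  "x \<in> finite_span phi \<Longrightarrow> \<exists>\<alpha> N. (\<forall>n\<ge>N. \<alpha> n = 0) \<and> x = lincomb phi \<alpha> N"
proof -
  assume "x \<in> finite_span phi"
  then obtain \<alpha> N where "x = lincomb phi \<alpha> N" unfolding finite_span_def by blast
  then show ?thesis
    using lincomb_truncate[of phi \<alpha> N] by (intro exI[of _ "\<lambda>n. if n < N then \<alpha> n else 0"] exI[of _ N]) simp
qed

lemma finite_span_supported_pair:
  assumes "x \<in> finite_span phi" "y \<in> finite_span phi"
  shows "\<exists>\<alpha> \<beta> N. (\<forall>n\<ge>N. \<alpha> n = 0) \<and> (\<forall>n\<ge>N. \<beta> n = 0) \<and> x = lincomb phi \<alpha> N \<and> y = lincomb phi \<beta> N"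
proof -
  obtain \<alpha> N \<beta> N' where a: "\<forall>n\<ge>N. \<alpha> n = 0" "x = lincomb phi \<alpha> N"
    and b: "\<forall>n\<ge>N'. \<beta> n = 0" "y = lincomb phi \<beta> N'"
    using assms finite_span_supported by metis
  then show ?thesis
    using lincomb_extend[of N \<alpha> "max N N'" phi] lincomb_extend[of N' \<beta> "max N N'" phi]
    by (intro exI[of _ \<alpha>] exI[of _ \<beta>] exI[of _ "max N N'"]) auto
qed

lemma csubspace_finite_span: "csubspace (finite_span phi)"
  unfolding csubspace_def
proof (intro conjI ballI allI)
  show "0 \<in> finite_span phi"
    unfolding finite_span_def lincomb_def by (auto intro!: exI[of _ 0])
next
  fix x y assume "x \<in> finite_span phi" "y \<in> finite_span phi"
  then obtain \<alpha> \<beta> N where "x = lincomb phi \<alpha> N" "y = lincomb phi \<beta> N"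
    using finite_span_supported_pair by blast
  then have "x + y = lincomb phi (\<lambda>n. \<alpha> n + \<beta> n) N" by (simp add: lincomb_add)
  then show "x + y \<in> finite_span phi" unfolding finite_span_def by blast
next
  fix c x assume "x \<in> finite_span phi"
  then obtain \<alpha> N where "x = lincomb phi \<alpha> N" unfolding finite_span_def by blast
  then have "scaleC c x = lincomb phi (\<lambda>n. c * \<alpha> n) N" by (simp add: lincomb_scale)
  then show "scaleC c x \<in> finite_span phi" unfolding finite_span_def by blast
qed

lemma riesz_basis_lincomb_inj:
  assumes rb: "riesz_basis phi" and \<alpha>: "\<forall>n\<ge>N. \<alpha> n = 0" and \<beta>: "\<forall>n\<ge>N. \<beta> n = 0"
    and eq: "lincomb phi \<alpha> N = lincomb phi \<beta> N"
  shows "\<alpha> = \<beta>"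
proof
  fix k
  obtain m where m: "0 < m" "\<And>\<gamma>. m * (\<Sum>n<N. (cmod (\<gamma> n))\<^sup>2) \<le> (norm (lincomb phi \<gamma> N))\<^sup>2"
    using riesz_basis_bounds[OF rb] by blast
  have "m * (\<Sum>n<N. (cmod (\<alpha> n - \<beta> n))\<^sup>2) \<le> 0"
    using m(2)[of "\<lambda>n. \<alpha> n - \<beta> n"] eq by (simp add: lincomb_diff)
  then have "(\<Sum>n<N. (cmod (\<alpha> n - \<beta> n))\<^sup>2) = 0"
    using m(1) by (meson antisym mult_le_0_iff not_le sum_nonneg zero_le_power2)
  then show "\<alpha> k = \<beta> k" using \<alpha> \<beta> by (cases "k < N") (auto simp: sum_nonneg_eq_0_iff)
qed

lemma span_coeffs_lincomb:
  assumes rb: "riesz_basis phi" and \<alpha>: "\<forall>n\<ge>N. \<alpha> n = 0"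
  shows "fst (span_coeffs phi (lincomb phi \<alpha> N)) = \<alpha>"
    and "\<forall>n\<ge>snd (span_coeffs phi (lincomb phi \<alpha> N)). \<alpha> n = 0"
proof -
  define p where "p = span_coeffs phi (lincomb phi \<alpha> N)"
  have "(\<forall>n\<ge>snd p. fst p n = 0) \<and> lincomb phi \<alpha> N = lincomb phi (fst p) (snd p)"
    unfolding p_def span_coeffs_def by (rule someI[of _ "(\<alpha>, N)"]) (simp add: \<alpha>)
  then have p: "\<forall>n\<ge>snd p. fst p n = 0" "lincomb phi \<alpha> N = lincomb phi (fst p) (snd p)"
    by blast+
  define N' where "N' = max N (snd p)"
  have \<alpha>': "\<forall>n\<ge>N'. \<alpha> n = 0" and p': "\<forall>n\<ge>N'. fst p n = 0"
    using \<alpha> p(1) by (simp_all add: N'_def)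
  have "lincomb phi \<alpha> N' = lincomb phi (fst p) N'"
    using p(2) lincomb_extend[of N \<alpha> N' phi] lincomb_extend[of "snd p" "fst p" N' phi] \<alpha> p(1)
    by (simp add: N'_def)
  then have "\<alpha> = fst p" using riesz_basis_lincomb_inj[OF rb \<alpha>' p'] by blast
  then show "fst (span_coeffs phi (lincomb phi \<alpha> N)) = \<alpha>" "\<forall>n\<ge>snd (span_coeffs phi (lincomb phi \<alpha> N)). \<alpha> n = 0"
    using p(1) by (simp_all add: p_def)
qed

lemma riesz_basis_coeff_map:
  fixes \<Phi> :: "(nat \<Rightarrow> complex) \<Rightarrow> nat \<Rightarrow> 'b::chilbert" and phi :: "nat \<Rightarrow> 'a::chilbert"
  assumes rb: "riesz_basis phi"
    and add: "\<And>\<alpha> \<beta> N. \<Phi> (\<lambda>n. \<alpha> n + \<beta> n) N = \<Phi> \<alpha> N + \<Phi> \<beta> N"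
    and scale: "\<And>c \<alpha> N. \<Phi> (\<lambda>n. c * \<alpha> n) N = scaleC c (\<Phi> \<alpha> N)"
    and extend: "\<And>\<alpha> N N'. \<forall>n\<ge>N. \<alpha> n = 0 \<Longrightarrow> N \<le> N' \<Longrightarrow> \<Phi> \<alpha> N' = \<Phi> \<alpha> N"
    and bound: "\<And>\<alpha> N. \<forall>n\<ge>N. \<alpha> n = 0 \<Longrightarrow> norm (\<Phi> \<alpha> N) \<le> K * norm (lincomb phi \<alpha> N)"
    and K: "0 \<le> K"
  shows "\<exists>g. bounded_clin g \<and> (\<forall>\<alpha> N. (\<forall>n\<ge>N. \<alpha> n = 0) \<longrightarrow> g (lincomb phi \<alpha> N) = \<Phi> \<alpha> N)"
proof -
  define f where "f x = \<Phi> (fst (span_coeffs phi x)) (snd (span_coeffs phi x))" for x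
  have f: "f (lincomb phi \<alpha> N) = \<Phi> \<alpha> N" if \<alpha>: "\<forall>n\<ge>N. \<alpha> n = 0" for \<alpha> N
  proof -
    let ?N' = "snd (span_coeffs phi (lincomb phi \<alpha> N))"
    have "\<Phi> \<alpha> (max N ?N') = \<Phi> \<alpha> ?N'" "\<Phi> \<alpha> (max N ?N') = \<Phi> \<alpha> N"
      using extend[of ?N' \<alpha> "max N ?N'"] extend[of N \<alpha> "max N ?N'"] span_coeffs_lincomb(2)[OF rb \<alpha>] \<alpha>
      by simp_all
    then show ?thesis unfolding f_def span_coeffs_lincomb(1)[OF rb \<alpha>] by simp
  qed
  have "\<exists>g. bounded_clin g \<and> (\<forall>x\<in>finite_span phi. g x = f x) \<and> (\<forall>x. norm (g x) \<le> K * norm x)"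
  proof (rule bounded_clin_extension[OF riesz_basis_dense[OF rb] csubspace_finite_span _ _ _ K])
    fix x y assume "x \<in> finite_span phi" "y \<in> finite_span phi"
    then obtain \<alpha> \<beta> N where "\<forall>n\<ge>N. \<alpha> n = 0" "\<forall>n\<ge>N. \<beta> n = 0" "x = lincomb phi \<alpha> N" "y = lincomb phi \<beta> N"
      using finite_span_supported_pair by blast
    then show "f (x + y) = f x + f y"
      using f[where \<alpha>="\<lambda>n. \<alpha> n + \<beta> n"] by (simp add: f add flip: lincomb_add)
  next
    fix c x assume "x \<in> finite_span phi"
    then obtain \<alpha> N where "\<forall>n\<ge>N. \<alpha> n = 0" "x = lincomb phi \<alpha> N"
      using finite_span_supported by blast
    then show "f (scaleC c x) = scaleC c (f x)"
      using f[where \<alpha>="\<lambda>n. c * \<alpha> n"] by (simp add: f scale flip: lincomb_scale)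
  next
    fix x assume "x \<in> finite_span phi"
    then obtain \<alpha> N where "\<forall>n\<ge>N. \<alpha> n = 0" "x = lincomb phi \<alpha> N"
      using finite_span_supported by blast
    then show "norm (f x) \<le> K * norm x" using f bound by simp
  qed
  then obtain g where g: "bounded_clin g" "\<And>x. x \<in> finite_span phi \<Longrightarrow> g x = f x" by blast
  have "lincomb phi \<alpha> N \<in> finite_span phi" for \<alpha> N unfolding finite_span_def by blast
  then show ?thesis using g f by (intro exI[of _ g]) simp
qed

lemma riesz_basis_bounded_clin_eqI:
  assumes rb: "riesz_basis phi" and fg: "bounded_clin f" "bounded_clin g"
    and eq: "\<And>j. f (phi j) = g (phi j)"
  shows "f = g"
proof (rule bounded_clin_eq_on_dense[OF riesz_basis_dense[OF rb] fg])
  fix x assume "x \<in> finite_span phi"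
  then obtain \<alpha> N where "x = lincomb phi \<alpha> N" unfolding finite_span_def by blast
  then show "f x = g x" using bounded_clin_lincomb[OF fg(1)] bounded_clin_lincomb[OF fg(2)] eq by simp
qed

lemma riesz_basis_multiplier_bound:
  assumes rb: "riesz_basis phi" and d: "\<And>n. cmod (d n) \<le> C"
  shows "\<exists>K\<ge>0. \<forall>\<alpha> N. norm (lincomb phi (\<lambda>n. d n * \<alpha> n) N) \<le> K * norm (lincomb phi \<alpha> N)"
proof -
  obtain m M where mM: "0 < m" "0 < M"
    and lower: "\<And>\<alpha> N. m * (\<Sum>n<N. (cmod (\<alpha> n))\<^sup>2) \<le> (norm (lincomb phi \<alpha> N))\<^sup>2"
    and upper: "\<And>\<alpha> N. (norm (lincomb phi \<alpha> N))\<^sup>2 \<le> M * (\<Sum>n<N. (cmod (\<alpha> n))\<^sup>2)"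
    using riesz_basis_bounds[OF rb] by blast
  have C: "0 \<le> C" using d[of 0] by (meson norm_ge_zero order_trans)
  define K where "K = sqrt (M / m) * C"
  have K: "0 \<le> K" using C mM by (simp add: K_def)
  have "(norm (lincomb phi (\<lambda>n. d n * \<alpha> n) N))\<^sup>2 \<le> (K * norm (lincomb phi \<alpha> N))\<^sup>2" for \<alpha> N
  proof -
    have "(norm (lincomb phi (\<lambda>n. d n * \<alpha> n) N))\<^sup>2 \<le> M * (\<Sum>n<N. (cmod (d n * \<alpha> n))\<^sup>2)"
      by (rule upper)
    also have "\<dots> \<le> M * (\<Sum>n<N. C\<^sup>2 * (cmod (\<alpha> n))\<^sup>2)"
    proof (intro mult_left_mono sum_mono)
      fix n
      have "cmod (d n) * cmod (\<alpha> n) \<le> C * cmod (\<alpha> n)" using d by (simp add: mult_right_mono)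
      then show "(cmod (d n * \<alpha> n))\<^sup>2 \<le> C\<^sup>2 * (cmod (\<alpha> n))\<^sup>2"
        by (simp add: norm_mult power_mult_distrib[symmetric] power_mono)
    qed (use mM in simp)
    also have "\<dots> = (M / m) * C\<^sup>2 * (m * (\<Sum>n<N. (cmod (\<alpha> n))\<^sup>2))"
      using mM by (simp add: sum_distrib_left[symmetric])
    also have "\<dots> \<le> (M / m) * C\<^sup>2 * (norm (lincomb phi \<alpha> N))\<^sup>2"
      using mM lower by (intro mult_left_mono) auto
    also have "\<dots> = (K * norm (lincomb phi \<alpha> N))\<^sup>2"
      using mM by (simp add: K_def power_mult_distrib)
    finally show ?thesis .
  qed
  then have "norm (lincomb phi (\<lambda>n. d n * \<alpha> n) N) \<le> K * norm (lincomb phi \<alpha> N)" for \<alpha> N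
    by (rule power2_le_imp_le) (simp add: K)
  with K show ?thesis by blast
qed

lemma riesz_basis_diagonal_operator:
  assumes rb: "riesz_basis phi" and d: "\<And>n. cmod (d n) \<le> C"
  shows "\<exists>Q. bounded_clin Q \<and> (\<forall>j. Q (phi j) = scaleC (d j) (phi j))"
proof -
  obtain K where K: "0 \<le> K"
    and bound: "\<And>\<alpha> N. norm (lincomb phi (\<lambda>n. d n * \<alpha> n) N) \<le> K * norm (lincomb phi \<alpha> N)"
    using riesz_basis_multiplier_bound[where d=d, OF rb d] by blast
  have add: "lincomb phi (\<lambda>n. d n * (\<alpha> n + \<beta> n)) N
      = lincomb phi (\<lambda>n. d n * \<alpha> n) N + lincomb phi (\<lambda>n. d n * \<beta> n) N" for \<alpha> \<beta> N
    by (simp add: distrib_left lincomb_add)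
  have scale: "lincomb phi (\<lambda>n. d n * (c * \<alpha> n)) N = scaleC c (lincomb phi (\<lambda>n. d n * \<alpha> n) N)"
    for c \<alpha> N
    using lincomb_scale[of phi c "\<lambda>n. d n * \<alpha> n" N] by (simp add: mult.left_commute)
  have extend: "lincomb phi (\<lambda>n. d n * \<alpha> n) N' = lincomb phi (\<lambda>n. d n * \<alpha> n) N"
    if "\<forall>n\<ge>N. \<alpha> n = 0" "N \<le> N'" for \<alpha> N N'
    using that by (intro lincomb_extend) auto
  obtain Q where Q: "bounded_clin Q"
    and Q_lincomb: "\<And>\<alpha> N. \<forall>n\<ge>N. \<alpha> n = 0 \<Longrightarrow> Q (lincomb phi \<alpha> N) = lincomb phi (\<lambda>n. d n * \<alpha> n) N"
    using riesz_basis_coeff_map[OF rb add scale extend bound K] by blast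
  have "Q (phi j) = scaleC (d j) (phi j)" for j
    using Q_lincomb[of "Suc j" "\<lambda>n. if n = j then 1 else 0"] lincomb_delta[of phi j]
    by (simp add: scaleC_one if_distrib cong: if_cong)
  with Q show ?thesis by blast
qed

lemma riesz_basis_coeff_functional:
  fixes phi :: "nat \<Rightarrow> 'a::chilbert"
  assumes rb: "riesz_basis phi"
  shows "\<exists>\<psi> :: 'a \<Rightarrow> complex. bounded_clin \<psi> \<and> (\<forall>j. \<psi> (phi j) = (if j = k then 1 else 0))"
proof -
  obtain m where m: "0 < m"
    and lower: "\<And>\<alpha> N. m * (\<Sum>n<N. (cmod (\<alpha> n))\<^sup>2) \<le> (norm (lincomb phi \<alpha> N))\<^sup>2"
    using riesz_basis_bounds[OF rb] by blast
  define K where "K = sqrt (1 / m)"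
  have K: "0 \<le> K" using m by (simp add: K_def)
  have sq: "(cmod (\<alpha> k))\<^sup>2 \<le> (K * norm (lincomb phi \<alpha> N))\<^sup>2" if \<alpha>: "\<forall>n\<ge>N. \<alpha> n = 0" for \<alpha> N
  proof -
    have "(cmod (\<alpha> k))\<^sup>2 \<le> (\<Sum>n<N. (cmod (\<alpha> n))\<^sup>2)"
      using \<alpha> by (cases "k < N") (auto intro: member_le_sum simp: sum_nonneg)
    also have "\<dots> \<le> (1 / m) * (norm (lincomb phi \<alpha> N))\<^sup>2"
      using m lower[of \<alpha> N] by (simp add: field_simps)
    also have "\<dots> = (K * norm (lincomb phi \<alpha> N))\<^sup>2"
      using m by (simp add: K_def power_mult_distrib)
    finally show ?thesis .
  qed
  have bound: "norm (\<alpha> k) \<le> K * norm (lincomb phi \<alpha> N)" if "\<forall>n\<ge>N. \<alpha> n = 0" for \<alpha> N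
    by (rule power2_le_imp_le[OF sq[OF that]]) (simp add: K)
  obtain \<psi> where \<psi>: "bounded_clin \<psi>"
    and \<psi>_lincomb: "\<And>\<alpha> N. \<forall>n\<ge>N. \<alpha> n = 0 \<Longrightarrow> \<psi> (lincomb phi \<alpha> N) = \<alpha> k"
    using riesz_basis_coeff_map[OF rb _ _ _ bound K] by auto
  have "\<psi> (phi j) = (if j = k then 1 else 0)" for j
    using \<psi>_lincomb[of "Suc j" "\<lambda>n. if n = j then 1 else 0"] lincomb_delta[of phi j 1]
    by (simp add: scaleC_one)
  with \<psi> show ?thesis by blast
qed

definition coeff_functional :: "(nat \<Rightarrow> 'a::chilbert) \<Rightarrow> nat \<Rightarrow> 'a \<Rightarrow> complex" where
  "coeff_functional phi k = (SOME \<psi>. bounded_clin \<psi> \<and> (\<forall>j. \<psi> (phi j) = (if j = k then 1 else 0)))"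

lemma
  assumes "riesz_basis phi"
  shows bounded_clin_coeff_functional: "bounded_clin (coeff_functional phi k)"
    and coeff_functional_basis: "coeff_functional phi k (phi j) = (if j = k then 1 else 0)"
  using someI_ex[OF riesz_basis_coeff_functional[OF assms, of k]]
  unfolding coeff_functional_def by blast+

lemma riesz_basis_diagonal_comp:
  assumes rb: "riesz_basis phi"
    and L: "bounded_clin L" "\<And>j. L (phi j) = scaleC (\<mu> j) (phi j)"
    and Q: "bounded_clin Q" "\<And>j. Q (phi j) = scaleC (d j) (phi j)"
    and E: "bounded_clin E" "\<And>j. E (phi j) = scaleC ((z - \<mu> j) * d j) (phi j)"
  shows "Q (scaleC z x - L x) = E x" and "scaleC z (Q x) - L (Q x) = E x"
proof -
  have left: "(\<lambda>x. Q (scaleC z x - L x)) = E"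
    by (rule riesz_basis_bounded_clin_eqI[OF rb _ E(1)])
      (simp_all add: bounded_clin_compose[OF Q(1)] bounded_clin_diff_fun bounded_clin_scaleC_fun
        bounded_clin_ident L Q(2) E(2) bounded_clin_diff[OF Q(1)] bounded_clin_scaleC[OF Q(1)]
        scaleC_scaleC left_diff_distrib flip: scaleC_diff_left)
  have right: "(\<lambda>x. scaleC z (Q x) - L (Q x)) = E"
    by (rule riesz_basis_bounded_clin_eqI[OF rb _ E(1)])
      (simp_all add: bounded_clin_compose[OF L(1) Q(1)] bounded_clin_diff_fun bounded_clin_scaleC_fun
        Q L(2) E(2) bounded_clin_scaleC[OF L(1)] scaleC_scaleC algebra_simps flip: scaleC_diff_left)
  show "Q (scaleC z x - L x) = E x" "scaleC z (Q x) - L (Q x) = E x"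
    using fun_cong[OF left, of x] fun_cong[OF right, of x] by simp_all
qed

section \<open>Resolvents of rank-one perturbations\<close>

lemma bounded_inverse_distances:
  fixes \<mu> :: "nat \<Rightarrow> complex"
  assumes finite: "finite {m. 1 < cmod (\<mu> m)}" and z: "1 < cmod z"
  shows "\<exists>C. \<forall>m. \<mu> m \<noteq> z \<longrightarrow> cmod (1 / (z - \<mu> m)) \<le> C"
proof -
  define P where "P = {m. 1 < cmod (\<mu> m)}"
  define C where "C = 1 / (cmod z - 1) + (\<Sum>m\<in>P. 1 / cmod (z - \<mu> m))"
  have "cmod (1 / (z - \<mu> m)) \<le> C" if "\<mu> m \<noteq> z" for m
  proof (cases "m \<in> P")
    case True
    then have "1 / cmod (z - \<mu> m) \<le> (\<Sum>m\<in>P. 1 / cmod (z - \<mu> m))"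
      using finite by (intro member_le_sum) (auto simp: P_def)
    moreover have "0 < 1 / (cmod z - 1)" using z by simp
    ultimately show ?thesis unfolding C_def norm_divide norm_one by linarith
  next
    case False
    then have "cmod z - 1 \<le> cmod (z - \<mu> m)"
      using norm_triangle_ineq2[of z "\<mu> m"] by (simp add: P_def)
    then have "1 / cmod (z - \<mu> m) \<le> 1 / (cmod z - 1)"
      using z by (intro divide_left_mono mult_pos_pos) auto
    moreover have "0 \<le> (\<Sum>m\<in>P. 1 / cmod (z - \<mu> m))" by (simp add: sum_nonneg)
    ultimately show ?thesis by (simp add: C_def norm_divide)
  qed
  then show ?thesis by blast
qed

lemma resolvent_setI:
  fixes L R :: "'a::chilbert \<Rightarrow> 'a"
  assumes right: "\<And>w. scaleC z (R w) - L (R w) = w" and left: "\<And>y. R (scaleC z y - L y) = y"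
    and R: "bounded_clin R"
  shows "z \<in> resolvent_set L" and "resolvent z L = R"
proof -
  have "bij (\<lambda>x. scaleC z x - L x)" by (rule o_bij[of R]) (auto simp: right left)
  moreover have "inv (\<lambda>x. scaleC z x - L x) = R" by (rule inv_equality) (auto simp: right left)
  ultimately show "z \<in> resolvent_set L" "resolvent z L = R"
    using R unfolding resolvent_set_def resolvent_def by auto
qed

text \<open>Sherman--Morrison formula: if \<open>Q\<close> inverts \<open>z - L\<close> and \<open>F (Q s) \<noteq> 1\<close>, then
  \<open>w \<mapsto> Q w + F (Q w) / (1 - F (Q s)) \<cdot> Q s\<close> inverts \<open>z - L - s F\<close>.\<close>

lemma rank_one_perturbation_resolvent:
  fixes L Q :: "'a::chilbert \<Rightarrow> 'a" and F :: "'a \<Rightarrow> complex"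
  assumes L: "bounded_clin L" and F: "bounded_clin F" and Q: "bounded_clin Q"
    and right: "\<And>w. scaleC z (Q w) - L (Q w) = w" and left: "\<And>y. Q (scaleC z y - L y) = y"
    and \<beta>: "F (Q s) \<noteq> 1"
  shows "z \<in> resolvent_set (\<lambda>x. L x + scaleC (F x) s)"
proof -
  define \<beta> where "\<beta> = F (Q s)"
  define R where "R w = Q w + scaleC (F (Q w) / (1 - \<beta>)) (Q s)" for w
  have "scaleC z (R w) - (L (R w) + scaleC (F (R w)) s) = w" for w
  proof -
    define c where "c = F (Q w) / (1 - \<beta>)"
    have c: "c - F (Q w) - c * \<beta> = 0" using \<beta> by (simp add: c_def \<beta>_def field_simps)
    have "scaleC z (R w) - L (R w) = (scaleC z (Q w) - L (Q w)) + scaleC c (scaleC z (Q s) - L (Q s))"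
      by (simp add: R_def c_def bounded_clin_add[OF L] bounded_clin_scaleC[OF L]
          scaleC_add_right scaleC_diff_right scaleC_scaleC mult.commute)
    then have "scaleC z (R w) - L (R w) = w + scaleC c s" by (simp add: right)
    moreover have "F (R w) = F (Q w) + c * \<beta>"
      by (simp add: R_def c_def \<beta>_def bounded_clin_add[OF F] bounded_clin_scaleC[OF F])
    ultimately have "scaleC z (R w) - (L (R w) + scaleC (F (R w)) s) = w + scaleC (c - F (Q w) - c * \<beta>) s"
      by (simp add: scaleC_diff_left scaleC_add_left algebra_simps)
    then show ?thesis using c by simp
  qed
  moreover have "R (scaleC z y - (L y + scaleC (F y) s)) = y" for y
  proof -
    have Qw: "Q (scaleC z y - (L y + scaleC (F y) s)) = y - scaleC (F y) (Q s)"
      using left[of y] by (simp add: diff_diff_eq[symmetric] bounded_clin_diff[OF Q] bounded_clin_scaleC[OF Q])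
    have "F (y - scaleC (F y) (Q s)) / (1 - \<beta>) = F y"
      using \<beta> by (simp add: \<beta>_def bounded_clin_diff[OF F] bounded_clin_scaleC[OF F] field_simps)
    then show ?thesis by (simp add: R_def Qw)
  qed
  moreover have "bounded_clin R"
  proof -
    have "bounded_clin (\<lambda>w. scaleC (inverse (1 - \<beta>)) (F (Q w)))"
      by (intro bounded_clin_scaleC_fun bounded_clin_compose[OF F Q])
    then have "bounded_clin (\<lambda>w. scaleC (F (Q w) / (1 - \<beta>)) (Q s))"
      by (intro bounded_clin_rank_one) (simp add: divide_inverse mult.commute)
    then show ?thesis unfolding R_def by (rule bounded_clin_add_fun[OF Q])
  qed
  ultimately show ?thesis by (rule resolvent_setI)
qed

text \<open>At a simple eigenvalue \<open>z\<close> of \<open>L\<close> (eigenvector \<open>phi\<close>, spectral functional \<open>\<psi>\<close>, and \<open>Q\<close> the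
  reduced resolvent), the rank-one perturbation \<open>L + s F\<close> removes \<open>z\<close> from the spectrum as soon as
  the mode is controllable (\<open>\<psi> s \<noteq> 0\<close>) and observable (\<open>F phi \<noteq> 0\<close>).\<close>

lemma eigenvalue_rank_one_perturbation_resolvent:
  fixes L Q :: "'a::chilbert \<Rightarrow> 'a" and F \<psi> :: "'a \<Rightarrow> complex"
  assumes L: "bounded_clin L" and F: "bounded_clin F" and Q: "bounded_clin Q" and \<psi>: "bounded_clin \<psi>"
    and eigenvector: "L phi = scaleC z phi" and range: "\<And>y. \<psi> (scaleC z y - L y) = 0"
    and right: "\<And>w. scaleC z (Q w) - L (Q w) = w - scaleC (\<psi> w) phi"
    and left: "\<And>y. Q (scaleC z y - L y) = y - scaleC (\<psi> y) phi"
    and controllable: "\<psi> s \<noteq> 0" and observable: "F phi \<noteq> 0"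
  shows "z \<in> resolvent_set (\<lambda>x. L x + scaleC (F x) s)"
proof -
  define \<kappa> where "\<kappa> w = - \<psi> w / \<psi> s" for w
  define P where "P w = Q (w + scaleC (\<kappa> w) s)" for w
  define R where "R w = P w + scaleC ((\<kappa> w - F (P w)) / F phi) phi" for w
  have "scaleC z (R w) - (L (R w) + scaleC (F (R w)) s) = w" for w
  proof -
    define c where "c = (\<kappa> w - F (P w)) / F phi"
    have "scaleC z (R w) - L (R w) = (scaleC z (P w) - L (P w)) + scaleC c (scaleC z phi - L phi)"
      by (simp add: R_def c_def bounded_clin_add[OF L] bounded_clin_scaleC[OF L]
          scaleC_add_right scaleC_diff_right scaleC_scaleC mult.commute)
    also have "\<dots> = w + scaleC (\<kappa> w) s - scaleC (\<psi> w + \<kappa> w * \<psi> s) phi"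
      using right eigenvector
      by (simp add: P_def bounded_clin_add[OF \<psi>] bounded_clin_scaleC[OF \<psi>])
    also have "\<dots> = w + scaleC (\<kappa> w) s" using controllable by (simp add: \<kappa>_def)
    finally have "scaleC z (R w) - L (R w) = w + scaleC (\<kappa> w) s" .
    moreover have "F (R w) = \<kappa> w"
      using observable by (simp add: R_def bounded_clin_add[OF F] bounded_clin_scaleC[OF F])
    ultimately show ?thesis by (simp add: algebra_simps)
  qed
  moreover have "R (scaleC z y - (L y + scaleC (F y) s)) = y" for y
  proof -
    define w where "w = scaleC z y - (L y + scaleC (F y) s)"
    have \<kappa>w: "\<kappa> w = F y"
      using range[of y] controllable
      by (simp add: \<kappa>_def w_def diff_diff_eq[symmetric] bounded_clin_diff[OF \<psi>] bounded_clin_scaleC[OF \<psi>])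
    then have Pw: "P w = y - scaleC (\<psi> y) phi"
      by (simp add: P_def w_def left)
    have "(\<kappa> w - F (P w)) / F phi = \<psi> y"
      using observable by (simp add: \<kappa>w Pw bounded_clin_diff[OF F] bounded_clin_scaleC[OF F])
    then show ?thesis by (simp add: R_def Pw flip: w_def)
  qed
  moreover have "bounded_clin R"
  proof -
    have \<kappa>: "bounded_clin \<kappa>"
      using bounded_clin_scaleC_fun[OF \<psi>, of "- inverse (\<psi> s)"]
      by (simp add: \<kappa>_def[abs_def] divide_inverse mult.commute)
    have P: "bounded_clin P"
      unfolding P_def by (intro bounded_clin_compose[OF Q] bounded_clin_add_fun bounded_clin_ident
          bounded_clin_rank_one \<kappa>)
    have "bounded_clin (\<lambda>w. scaleC (inverse (F phi)) (\<kappa> w - F (P w)))"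
      by (intro bounded_clin_scaleC_fun bounded_clin_diff_fun \<kappa> bounded_clin_compose[OF F P])
    then have "bounded_clin (\<lambda>w. scaleC ((\<kappa> w - F (P w)) / F phi) phi)"
      by (intro bounded_clin_rank_one) (simp add: divide_inverse mult.commute)
    then show ?thesis unfolding R_def by (rule bounded_clin_add_fun[OF P])
  qed
  ultimately show ?thesis by (rule resolvent_setI)
qed

section \<open>Riesz-spectral systems with bounded closed loop\<close>

locale riesz_spectral_feedback =
  fixes A :: "'a::chilbert \<Rightarrow> 'a" and D :: "'a set" and T :: "real \<Rightarrow> 'a \<Rightarrow> 'a"
    and lam :: "nat \<Rightarrow> complex" and phi :: "nat \<Rightarrow> 'a"
    and B :: "complex \<Rightarrow> 'a" and F :: "'a \<Rightarrow> complex" and \<tau> :: real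
    and TF :: "real \<Rightarrow> 'a \<Rightarrow> 'a" and M :: real
  assumes riesz_spectral: "riesz_spectral A D lam phi"
    and generates: "generates A D T"
    and finite_unstable: "finite {n. 0 < Re (lam n)}"
    and B: "bounded_clin B" and F: "bounded_clin F"
    and closed_loop: "generates (\<lambda>x. A x + B (F x)) D TF"
    and closed_loop_bounded: "\<And>t x. 0 \<le> t \<Longrightarrow> norm (TF t x) \<le> M * norm x"
    and tau: "0 < \<tau>"
begin

abbreviation \<psi> :: "nat \<Rightarrow> 'a \<Rightarrow> complex" where "\<psi> \<equiv> coeff_functional phi"

definition \<mu> :: "nat \<Rightarrow> complex" where "\<mu> n = exp (lam n * of_real \<tau>)"

definition s\<^sub>\<tau> :: 'a where "s\<^sub>\<tau> = Sop T B \<tau> 1"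

lemma riesz_basis: "riesz_basis phi"
  and phi_in_domain: "phi n \<in> D"
  and phi_nonzero: "phi n \<noteq> 0"
  and A_phi: "A (phi n) = scaleC (lam n) (phi n)"
  and inj_lam: "inj lam"
  using riesz_spectral unfolding riesz_spectral_def by auto

lemma semigroup: "c0_semigroup T"
  by (rule generates_c0_semigroup[OF generates])

lemma bounded_clin_T: "0 \<le> t \<Longrightarrow> bounded_clin (T t)"
  by (rule c0_semigroup_bounded_clin[OF semigroup])

lemma T_phi: "0 \<le> t \<Longrightarrow> T t (phi j) = scaleC (exp (lam j * of_real t)) (phi j)"
  by (rule generates_eigenvector[OF generates phi_in_domain A_phi])

lemma coeff_T:
  assumes t: "0 \<le> t"
  shows "\<psi> k (T t x) = exp (lam k * of_real t) * \<psi> k x"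
proof -
  have \<psi>: "bounded_clin (\<psi> k)" by (rule bounded_clin_coeff_functional[OF riesz_basis])
  have "(\<lambda>x. \<psi> k (T t x)) = (\<lambda>x. scaleC (exp (lam k * of_real t)) (\<psi> k x))"
    by (rule riesz_basis_bounded_clin_eqI[OF riesz_basis bounded_clin_compose[OF \<psi> bounded_clin_T[OF t]]
          bounded_clin_scaleC_fun[OF \<psi>]])
      (auto simp: T_phi[OF t] bounded_clin_scaleC[OF \<psi>] coeff_functional_basis[OF riesz_basis])
  then show ?thesis by (simp add: fun_eq_iff)
qed

lemma coeff_A: "y \<in> D \<Longrightarrow> \<psi> k (A y) = lam k * \<psi> k y"
  by (rule generates_left_eigenvector_generator[OF generates bounded_clin_coeff_functional[OF riesz_basis] coeff_T])

lemma integrable_T: "(\<lambda>r. T r x) integrable_on {0..\<tau>}"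
  by (intro integrable_continuous_interval continuous_on_subset[OF c0_semigroup_continuous_on[OF semigroup]]) auto

lemma Sop_eq: "Sop T B \<tau> u = scaleC u s\<^sub>\<tau>"
proof -
  have "Sop T B \<tau> u = integral {0..\<tau>} (\<lambda>r. scaleC u (T r (B 1)))"
    unfolding Sop_def using bounded_clin_scaleC[OF B, of u 1]
    by (intro integral_cong) (simp add: bounded_clin_scaleC[OF bounded_clin_T])
  also have "\<dots> = scaleC u (integral {0..\<tau>} (\<lambda>r. T r (B 1)))"
    using integral_linear[OF integrable_T bounded_linear_scaleC_right] by (simp add: o_def)
  finally show ?thesis unfolding s\<^sub>\<tau>_def Sop_def .
qed

lemma Delta_eq: "Delta T B F \<tau> x = T \<tau> x + scaleC (F x) s\<^sub>\<tau>"
  unfolding Delta_def Sop_eq ..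

lemma coeff_s\<^sub>\<tau>: "lam k \<noteq> 0 \<Longrightarrow> \<psi> k s\<^sub>\<tau> = \<psi> k (B 1) * ((exp (lam k * of_real \<tau>) - 1) / lam k)"
proof -
  assume lam: "lam k \<noteq> 0"
  have \<psi>: "bounded_linear (\<psi> k)"
    by (rule bounded_clin_imp_bounded_linear[OF bounded_clin_coeff_functional[OF riesz_basis]])
  have "\<psi> k s\<^sub>\<tau> = integral {0..\<tau>} (\<lambda>r. \<psi> k (T r (B 1)))"
    unfolding s\<^sub>\<tau>_def Sop_def using integral_linear[OF integrable_T \<psi>, symmetric] by (simp add: o_def)
  also have "\<dots> = integral {0..\<tau>} (\<lambda>r. exp (lam k * of_real r) * \<psi> k (B 1))"
    by (rule integral_cong) (simp add: coeff_T)
  also have "\<dots> = integral {0..\<tau>} (\<lambda>r. exp (lam k * of_real r)) * \<psi> k (B 1)"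
    by (rule integral_mult_left)
  finally show ?thesis using integral_exp_complex[OF lam, of \<tau>] tau by simp
qed

text \<open>Since the closed-loop semigroup is bounded, an unstable mode that \<open>F\<close> does not observe or
  \<open>B\<close> does not reach would remain an eigenvector (resp. left eigenvector) of \<open>A + B F\<close>,
  which is incompatible with \<open>Re \<lambda> > 0\<close>.\<close>

lemma unstable_mode_observable:
  assumes "0 < Re (lam n)"
  shows "F (phi n) \<noteq> 0"
proof
  assume "F (phi n) = 0"
  then have "A (phi n) + B (F (phi n)) = scaleC (lam n) (phi n)"
    using A_phi bounded_clin_zero[OF B] by simp
  then have "Re (lam n) \<le> 0"
    using bounded_semigroup_eigenvalue[OF closed_loop closed_loop_bounded phi_in_domain[of n] phi_nonzero[of n],
        of "lam n"] by simp
  then show False using assms by simp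
qed

lemma unstable_mode_controllable:
  assumes unstable: "0 < Re (lam n)"
  shows "\<psi> n s\<^sub>\<tau> \<noteq> 0"
proof -
  have \<psi>: "bounded_clin (\<psi> n)" by (rule bounded_clin_coeff_functional[OF riesz_basis])
  have "\<psi> n (B 1) \<noteq> 0"
  proof
    assume B1: "\<psi> n (B 1) = 0"
    have "\<psi> n (A y + B (F y)) = lam n * \<psi> n y" if "y \<in> D" for y
    proof -
      have "B (F y) = scaleC (F y) (B 1)" using bounded_clin_scaleC[OF B, of "F y" 1] by simp
      then show ?thesis
        using B1 coeff_A[OF that] by (simp add: bounded_clin_add[OF \<psi>] bounded_clin_scaleC[OF \<psi>])
    qed
    then have "Re (lam n) \<le> 0"
      using bounded_semigroup_left_eigenvalue[OF closed_loop closed_loop_bounded \<psi> _ phi_in_domain[of n]]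
      by (simp add: coeff_functional_basis[OF riesz_basis])
    then show False using unstable by simp
  qed
  moreover have "lam n \<noteq> 0" using unstable by auto
  moreover have "1 < cmod (exp (lam n * of_real \<tau>))" using unstable tau by simp
  then have "exp (lam n * of_real \<tau>) \<noteq> 1" by (metis norm_one less_irrefl)
  ultimately show ?thesis
    using coeff_s\<^sub>\<tau> by (metis divide_eq_0_iff mult_eq_0_iff right_minus_eq)
qed


lemma norm_\<mu>_gt_1_iff: "1 < cmod (\<mu> n) \<longleftrightarrow> 0 < Re (lam n)"
  using tau by (simp add: \<mu>_def zero_less_mult_iff)

lemma T_\<tau>_phi: "T \<tau> (phi j) = scaleC (\<mu> j) (phi j)"
  using T_phi tau by (simp add: \<mu>_def)

text \<open>\<open>E\<close> is the spectral projection onto the span of the \<open>phi j\<close> with \<open>\<mu> j \<noteq> z\<close>. The multipliers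
  \<open>1 / (z - \<mu> j)\<close> are bounded since only the finitely many unstable \<open>\<mu> j\<close> lie outside the unit disc.\<close>

lemma reduced_resolvent:
  assumes z: "1 < cmod z" and E: "bounded_clin E" "\<And>j. E (phi j) = (if \<mu> j = z then 0 else phi j)"
  shows "\<exists>Q. bounded_clin Q \<and> (\<forall>x. Q (scaleC z x - T \<tau> x) = E x) \<and> (\<forall>x. scaleC z (Q x) - T \<tau> (Q x) = E x)"
proof -
  have "finite {m. 1 < cmod (\<mu> m)}" using finite_unstable by (simp add: norm_\<mu>_gt_1_iff)
  then obtain C where C: "\<And>m. \<mu> m \<noteq> z \<Longrightarrow> cmod (1 / (z - \<mu> m)) \<le> C"
    using bounded_inverse_distances z by blast
  define d where "d j = (if \<mu> j = z then 0 else 1 / (z - \<mu> j))" for j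
  have "cmod (d j) \<le> max C 0" for j
    using C[of j] by (auto simp: d_def)
  then obtain Q where Q: "bounded_clin Q" "\<And>j. Q (phi j) = scaleC (d j) (phi j)"
    using riesz_basis_diagonal_operator[OF riesz_basis] by blast
  have "E (phi j) = scaleC ((z - \<mu> j) * d j) (phi j)" for j
    by (simp add: E(2) d_def scaleC_one)
  with riesz_basis_diagonal_comp[OF riesz_basis bounded_clin_T[OF less_imp_le[OF tau]] T_\<tau>_phi Q E(1)]
  show ?thesis using Q(1) by blast
qed

lemma resolvent_off_spectrum:
  assumes z: "1 < cmod z" and off: "\<And>n. \<mu> n \<noteq> z"
    and ii: "\<forall>z\<in>resolvent_set (T \<tau>). 1 < cmod z \<longrightarrow>
              (\<lambda>u. F (resolvent z (T \<tau>) (Sop T B \<tau> u))) \<noteq> (\<lambda>u. u)"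
  shows "z \<in> resolvent_set (Delta T B F \<tau>)"
proof -
  obtain Q where Q: "bounded_clin Q" and left: "\<And>x. Q (scaleC z x - T \<tau> x) = x"
    and right: "\<And>x. scaleC z (Q x) - T \<tau> (Q x) = x"
    using reduced_resolvent[OF z bounded_clin_ident] off by auto
  have "z \<in> resolvent_set (T \<tau>)" "resolvent z (T \<tau>) = Q"
    using resolvent_setI[OF right left Q] by blast+
  then have "(\<lambda>u. F (Q (Sop T B \<tau> u))) \<noteq> (\<lambda>u. u)" using ii z by auto
  moreover have "F (Q (Sop T B \<tau> u)) = u * F (Q s\<^sub>\<tau>)" for u
    by (simp add: Sop_eq bounded_clin_scaleC[OF Q] bounded_clin_scaleC[OF F])
  ultimately have "F (Q s\<^sub>\<tau>) \<noteq> 1" by auto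
  with rank_one_perturbation_resolvent[OF bounded_clin_T[OF less_imp_le[OF tau]] F Q right left]
  show ?thesis by (simp add: Delta_eq[abs_def])
qed

lemma \<mu>_inj_on_unstable:
  assumes i: "\<forall>l::int. \<forall>n m. l \<noteq> 0 \<and> 0 < Re (lam n) \<and> 0 < Re (lam m) \<longrightarrow>
              complex_of_real \<tau> * (lam n - lam m) \<noteq> 2 * of_int l * complex_of_real pi * \<i>"
  shows "inj_on \<mu> {n. 0 < Re (lam n)}"
proof (rule inj_onI)
  fix j n assume j: "j \<in> {n. 0 < Re (lam n)}" and n: "n \<in> {n. 0 < Re (lam n)}" and "\<mu> j = \<mu> n"
  then obtain l :: int where l: "lam j * of_real \<tau> = lam n * of_real \<tau> + (of_int (2 * l) * pi) * \<i>"
    unfolding \<mu>_def exp_eq by blast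
  then have "complex_of_real \<tau> * (lam j - lam n) = 2 * of_int l * complex_of_real pi * \<i>"
    by (simp add: algebra_simps)
  then have "l = 0" using i[rule_format, of l j n] j n by auto
  then have "lam j = lam n" using l tau by simp
  then show "j = n" using inj_lam by (simp add: inj_eq)
qed

lemma resolvent_at_eigenvalue:
  assumes z: "1 < cmod z" and n: "\<mu> n = z"
    and i: "\<forall>l::int. \<forall>n m. l \<noteq> 0 \<and> 0 < Re (lam n) \<and> 0 < Re (lam m) \<longrightarrow>
              complex_of_real \<tau> * (lam n - lam m) \<noteq> 2 * of_int l * complex_of_real pi * \<i>"
  shows "z \<in> resolvent_set (Delta T B F \<tau>)"
proof -
  have unstable: "0 < Re (lam n)" using z n norm_\<mu>_gt_1_iff by metis
  have simple: "j = n" if "\<mu> j = z" for j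
  proof (rule inj_onD[OF \<mu>_inj_on_unstable[OF i]])
    show "\<mu> j = \<mu> n" using that n by simp
    show "j \<in> {n. 0 < Re (lam n)}" using z that norm_\<mu>_gt_1_iff by (metis mem_Collect_eq)
    show "n \<in> {n. 0 < Re (lam n)}" using unstable by simp
  qed
  have \<psi>: "bounded_clin (\<psi> n)" by (rule bounded_clin_coeff_functional[OF riesz_basis])
  define E where "E x = x - scaleC (\<psi> n x) (phi n)" for x
  have "bounded_clin E"
    unfolding E_def[abs_def] by (intro bounded_clin_diff_fun bounded_clin_ident bounded_clin_rank_one \<psi>)
  moreover have "E (phi j) = (if \<mu> j = z then 0 else phi j)" for j
  proof (cases "j = n")
    case True
    then show ?thesis using n by (simp add: E_def coeff_functional_basis[OF riesz_basis] scaleC_one)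
  next
    case False
    then have "\<mu> j \<noteq> z" using simple by blast
    with False show ?thesis by (simp add: E_def coeff_functional_basis[OF riesz_basis])
  qed
  ultimately obtain Q where Q: "bounded_clin Q" and left: "\<And>x. Q (scaleC z x - T \<tau> x) = E x"
    and right: "\<And>x. scaleC z (Q x) - T \<tau> (Q x) = E x"
    using reduced_resolvent[OF z] by blast
  have "\<psi> n (scaleC z y - T \<tau> y) = 0" for y
    using coeff_T[of \<tau> n y] tau n
    by (simp add: bounded_clin_diff[OF \<psi>] bounded_clin_scaleC[OF \<psi>] \<mu>_def)
  from eigenvalue_rank_one_perturbation_resolvent[OF bounded_clin_T[OF less_imp_le[OF tau]] F Q \<psi>
      _ this right[unfolded E_def] left[unfolded E_def]
      unstable_mode_controllable[OF unstable] unstable_mode_observable[OF unstable]]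
  show ?thesis using T_\<tau>_phi[of n] n by (simp add: Delta_eq[abs_def])
qed

end

theorem mainTheorem11:
  fixes A :: "'a::chilbert \<Rightarrow> 'a" and D :: "'a set" and T :: "real \<Rightarrow> 'a \<Rightarrow> 'a"
    and lam :: "nat \<Rightarrow> complex" and phi :: "nat \<Rightarrow> 'a"
    and B :: "complex \<Rightarrow> 'a" and F :: "'a \<Rightarrow> complex" and \<tau> :: real
  assumes RS: "riesz_spectral A D lam phi"
    and gen: "generates A D T"
    and fin: "finite {n. 0 < Re (lam n)}"
    and B: "bounded_clin B"
    and F: "bounded_clin F"
    and closed_loop: "\<exists>TF. generates (\<lambda>x. A x + B (F x)) D TF
                         \<and> (\<exists>M. \<forall>t\<ge>0. \<forall>x. norm (TF t x) \<le> M * norm x)"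
    and tau: "\<tau> > 0"
    and i: "\<forall>l::int. \<forall>n m. l \<noteq> 0 \<and> 0 < Re (lam n) \<and> 0 < Re (lam m) \<longrightarrow>
              complex_of_real \<tau> * (lam n - lam m) \<noteq> 2 * of_int l * complex_of_real pi * \<i>"
    and ii: "\<forall>z\<in>resolvent_set (T \<tau>). 1 < cmod z \<longrightarrow>
              (\<lambda>u. F (resolvent z (T \<tau>) (Sop T B \<tau> u))) \<noteq> (\<lambda>u. u)"
  shows "{z. 1 < cmod z} \<subseteq> resolvent_set (Delta T B F \<tau>)"
proof
  obtain TF M where "generates (\<lambda>x. A x + B (F x)) D TF" "\<forall>t\<ge>0. \<forall>x. norm (TF t x) \<le> M * norm x"
    using closed_loop by blast
  then interpret riesz_spectral_feedback A D T lam phi B F \<tau> TF M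
    using RS gen fin B F tau by unfold_locales auto
  fix z assume "z \<in> {z. 1 < cmod z}"
  then show "z \<in> resolvent_set (Delta T B F \<tau>)"
    using resolvent_off_spectrum[OF _ _ ii] resolvent_at_eigenvalue[OF _ _ i]
    by (cases "\<exists>n. \<mu> n = z") auto
qed

end
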